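(* Let $\mathcal L\subset|E+2F|$ be a base-point-free $2$-dimensional linear subsystem on $\mathbb F_1$, and let $\pi:\mathbb F_1\to\check{\mathcal L}\cong\mathbb P^2$ be the induced finite degree $3$ morphism, with quartic branch curve $B$. Then the following are equivalent: (i) $\mathcal L$ contains a member of the form $E+2F_0$ with $F_0$ a fibre; (ii) $B$ contains a line as a component; (iii) $B=Z+a$ with $Z$ an irreducible cuspidal cubic and $a$ the tangent line to $Z$ at its unique flex. Moreover $\mathcal L$ contains at most one member of the form $E+2F_0$, and exactly one member of the form $E+F_1+F_2$ or $E+2F_0$ (fibres $F_1,F_2$).
   Context: $\mathbb F_1$ is the blow-up of $\mathbb P^2$ at a point, $E$ the exceptional curve, $F$ the fibre class; $\pi$ sends a point $x$ to the pencil of members of $\mathcal L$ through $x$, and $\pi^{-1}(P)$ is the base locus of the pencil $P$ off $E$... i.e. the triple cover has fibres the base points of pencils in $\mathcal L$. $B$ is the branch divisor of $\pi$. *)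

theory Defs
  imports "HOL-Analysis.Analysis" "HOL-Computational_Algebra.Polynomial"
begin

(* Coordinates.  P^2 has homogeneous coordinates (x,y,z) = (v$1, v$2, v$3);
   F_1 is the blow-up of P^2 at p = [0:0:1].  A projective point is the class
   of a nonzero vector under nonzero scalars. *)

definition proj :: "complex^'n \<Rightarrow> (complex^'n) set" where
  "proj v = {c *s v | c. c \<noteq> 0}"

(* |E+2F| = |2H - E| = conics through p.  A member is given by its coefficient
   vector q :: complex^5 of  q$1 x^2 + q$2 xy + q$3 y^2 + q$4 xz + q$5 yz. *)
definition evalq :: "complex^5 \<Rightarrow> complex^3 \<Rightarrow> complex" where
  "evalq q v = q$1 * (v$1)^2 + q$2 * v$1 * v$2 + q$3 * (v$2)^2
              + q$4 * v$1 * v$3 + q$5 * v$2 * v$3"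

(* value of the section on the exceptional curve E at the tangent direction w *)
definition linE :: "complex^5 \<Rightarrow> complex^2 \<Rightarrow> complex" where
  "linE q w = q$4 * w$1 + q$5 * w$2"

(* points of F_1: points of P^2 other than p, and points of E = P(T_p P^2) *)
datatype f1pt = Off "(complex^3) set" | OnE "(complex^2) set"

definition F1 :: "f1pt set" where
  "F1 = {Off (proj v) | v::complex^3. (v$1, v$2) \<noteq> (0,0)}
        \<union> {OnE (proj w) | w::complex^2. w \<noteq> 0}"

definition vanishes :: "complex^5 \<Rightarrow> f1pt \<Rightarrow> bool" where
  "vanishes q P = (case P of Off S \<Rightarrow> (\<forall>v\<in>S. evalq q v = 0)
                            | OnE S \<Rightarrow> (\<forall>w\<in>S. linE q w = 0))"

definition Lspan :: "(3 \<Rightarrow> complex^5) \<Rightarrow> (complex^5) set" where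
  "Lspan qs = {(\<Sum>i\<in>UNIV. c$i *s qs i) | c::complex^3. True}"

definition lin_indep3 :: "(3 \<Rightarrow> complex^5) \<Rightarrow> bool" where
  "lin_indep3 qs = (\<forall>c::complex^3. (\<Sum>i\<in>UNIV. c$i *s qs i) = 0 \<longrightarrow> c = 0)"

definition base_point_free :: "(3 \<Rightarrow> complex^5) \<Rightarrow> bool" where
  "base_point_free qs = (\<forall>P\<in>F1. \<exists>i. \<not> vanishes (qs i) P)"

(* pi : F_1 -> P^2,  pi(P) = [qs 1 (P) : qs 2 (P) : qs 3 (P)];  maps_to qs P t means pi(P) = [t].
   (P^2 here is the dual of L: the point [t] is the pencil of members
    sum c_i qs i with sum c_i t_i = 0.) *)
definition maps_to :: "(3 \<Rightarrow> complex^5) \<Rightarrow> f1pt \<Rightarrow> complex^3 \<Rightarrow> bool" where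
  "maps_to qs P t = (case P of
      Off S \<Rightarrow> (\<exists>v\<in>S. (\<chi> i. evalq (qs i) v) \<in> proj t)
    | OnE S \<Rightarrow> (\<exists>w\<in>S. (\<chi> i. linE (qs i) w) \<in> proj t))"

(* branch locus of the finite degree 3 morphism pi: points with fewer than 3
   distinct preimages (set-theoretic support of the branch divisor B) *)
definition branch :: "(3 \<Rightarrow> complex^5) \<Rightarrow> (complex^3) set set" where
  "branch qs = {proj t | t. t \<noteq> 0 \<and> card {P \<in> F1. maps_to qs P t} < 3}"

(* the member of |E+2F| given by the conic (l1 x + l2 y)(m1 x + m2 y):
   its divisor on F_1 is E + F_l + F_m, F_l, F_m the fibres (strict transforms
   of the lines l = 0, m = 0 through p). *)
definition fibquad :: "complex^2 \<Rightarrow> complex^2 \<Rightarrow> complex^5" where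
  "fibquad l m = (\<chi> i. if i = 1 then l$1 * m$1
                     else if i = 2 then l$1 * m$2 + l$2 * m$1
                     else if i = 3 then l$2 * m$2 else 0)"

definition members_E2F :: "(3 \<Rightarrow> complex^5) \<Rightarrow> (complex^5) set set" where
  "members_E2F qs = {proj q | q. q \<in> Lspan qs \<and> (\<exists>l. l \<noteq> 0 \<and> q = fibquad l l)}"

definition members_EFF :: "(3 \<Rightarrow> complex^5) \<Rightarrow> (complex^5) set set" where
  "members_EFF qs = {proj q | q. q \<in> Lspan qs \<and> (\<exists>l m. l \<noteq> 0 \<and> m \<noteq> 0 \<and> q = fibquad l m)}"

definition is_form :: "nat \<Rightarrow> (complex^3 \<Rightarrow> complex) \<Rightarrow> bool" where
  "is_form d f = ((\<exists>c :: nat \<Rightarrow> nat \<Rightarrow> nat \<Rightarrow> complex.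
        \<forall>v. f v = (\<Sum>(i,j,k)\<in>{(i,j,k). i + j + k = d}. c i j k * (v$1)^i * (v$2)^j * (v$3)^k))
      \<and> (\<exists>v. f v \<noteq> 0))"

definition zeroset :: "(complex^3 \<Rightarrow> complex) \<Rightarrow> (complex^3) set set" where
  "zeroset f = {proj v | v. v \<noteq> 0 \<and> f v = 0}"

definition indep2 :: "complex^3 \<Rightarrow> complex^3 \<Rightarrow> bool" where
  "indep2 P Q = (\<forall>a b. a *s P + b *s Q = 0 \<longrightarrow> a = 0 \<and> b = 0)"

definition lineset :: "complex^3 \<Rightarrow> complex^3 \<Rightarrow> (complex^3) set set" where
  "lineset P Q = {proj (a *s P + b *s Q) | a b. (a, b) \<noteq> (0, 0)}"

(* the line through [P] in direction [Q] meets V(f) at [P] with multiplicity \<ge> k *)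
definition contact :: "(complex^3 \<Rightarrow> complex) \<Rightarrow> complex^3 \<Rightarrow> complex^3 \<Rightarrow> nat \<Rightarrow> bool" where
  "contact f P Q k = (\<exists>p :: complex poly. (\<forall>s. f (P + s *s Q) = poly p s) \<and> [:0, 1:] ^ k dvd p)"

definition irreducible_cubic :: "(complex^3 \<Rightarrow> complex) \<Rightarrow> bool" where
  "irreducible_cubic f = (is_form 3 f \<and>
     \<not> (\<exists>l g. is_form 1 l \<and> is_form 2 g \<and> (\<forall>v. f v = l v * g v)))"

definition singular_pt :: "(complex^3 \<Rightarrow> complex) \<Rightarrow> complex^3 \<Rightarrow> bool" where
  "singular_pt f P = (P \<noteq> 0 \<and> f P = 0 \<and> (\<forall>Q. indep2 P Q \<longrightarrow> contact f P Q 2))"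

definition smooth_pt :: "(complex^3 \<Rightarrow> complex) \<Rightarrow> complex^3 \<Rightarrow> bool" where
  "smooth_pt f P = (P \<noteq> 0 \<and> f P = 0 \<and> \<not> singular_pt f P)"

(* ordinary cusp (double point whose tangent cone is a single double line) *)
definition cusp_pt :: "(complex^3 \<Rightarrow> complex) \<Rightarrow> complex^3 \<Rightarrow> bool" where
  "cusp_pt f P = (singular_pt f P \<and> (\<exists>Q. indep2 P Q \<and> contact f P Q 3 \<and>
      (\<forall>Q'. indep2 P Q' \<and> contact f P Q' 3 \<longrightarrow> lineset P Q' = lineset P Q)))"

definition cuspidal_cubic :: "(complex^3 \<Rightarrow> complex) \<Rightarrow> bool" where
  "cuspidal_cubic f = (irreducible_cubic f \<and> (\<exists>P. cusp_pt f P))"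

definition flex_pt :: "(complex^3 \<Rightarrow> complex) \<Rightarrow> complex^3 \<Rightarrow> bool" where
  "flex_pt f P = (smooth_pt f P \<and> (\<exists>Q. indep2 P Q \<and> contact f P Q 3))"

end

theory Submission
  imports Defs "HOL-Computational_Algebra.Fundamental_Theorem_Algebra"
begin

(* Write a member of |E+2F| as Q(x,y) + z L(x,y).  The map pi sends the ruling of F_1 over a
   direction [w] linearly onto the line through Q(w) and L(w), which are independent because the net
   is base point free.  Hence the fibre over [t] corresponds to the roots of the binary cubic
   C_t(w) = det(Q(w), L(w), t), and B is the zero locus of its discriminant.  As L(w) = w_1 U + w_2 V,
   the part of t lying in span(U, V), i.e. on the line pi(E), enters C_t only through the quadratic
   form E_0(w) = det(Q(w), U, V), which is the unique member E + F_1 + F_2 of the net; (i) says that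
   E_0 is a square.  If E_0 = z_1^2 in suitable coordinates, a Tschirnhaus shift turns the
   discriminant into x (4 z^3 + 27 x y^2): the line pi(E) together with a cuspidal cubic whose flex
   tangent it is.  If E_0 = z_1 z_2, the discriminant is a quartic vanishing on no line. *)

lemma vec2_eq_iff: "(x::'a^2) = y \<longleftrightarrow> x$1 = y$1 \<and> x$2 = y$2"
  by (simp add: vec_eq_iff forall_2)

lemma vec3_eq_iff: "(x::'a^3) = y \<longleftrightarrow> x$1 = y$1 \<and> x$2 = y$2 \<and> x$3 = y$3"
  by (simp add: vec_eq_iff forall_3)

lemma exhaust_5:
  fixes x :: 5
  shows "x = 1 \<or> x = 2 \<or> x = 3 \<or> x = 4 \<or> x = 5"
proof (induct x)
  case (of_int z)
  then have "z = 0 \<or> z = 1 \<or> z = 2 \<or> z = 3 \<or> z = 4" by simp presburger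
  then show ?case by auto
qed

lemma forall_5: "(\<forall>i::5. P i) \<longleftrightarrow> P 1 \<and> P 2 \<and> P 3 \<and> P 4 \<and> P 5"
  by (metis exhaust_5)

lemma vec5_eq_iff:
  "(x::'a^5) = y \<longleftrightarrow> x$1 = y$1 \<and> x$2 = y$2 \<and> x$3 = y$3 \<and> x$4 = y$4 \<and> x$5 = y$5"
  by (simp add: vec_eq_iff forall_5)

lemma vec2_neq_0_iff: "(x::'a::zero^2) \<noteq> 0 \<longleftrightarrow> x$1 \<noteq> 0 \<or> x$2 \<noteq> 0"
  by (auto simp: vec2_eq_iff)

lemma proj_self: "v \<in> proj v"
  unfolding proj_def by (auto intro: exI[of _ 1])

lemma mem_proj_iff: "x \<in> proj v \<longleftrightarrow> (\<exists>c. c \<noteq> 0 \<and> x = c *s v)"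
  unfolding proj_def by auto

lemma proj_smult:
  assumes "c \<noteq> 0"
  shows "proj (c *s v) = proj v"
proof (rule set_eqI)
  fix x
  have "(\<exists>d. d \<noteq> 0 \<and> x = d *s (c *s v)) \<longleftrightarrow> (\<exists>d. d \<noteq> 0 \<and> x = d *s v)"
  proof
    assume "\<exists>d. d \<noteq> 0 \<and> x = d *s (c *s v)"
    then obtain d where "d \<noteq> 0" "x = (d * c) *s v" by (auto simp: vector_smult_assoc)
    then show "\<exists>d. d \<noteq> 0 \<and> x = d *s v" using assms by (auto intro!: exI[of _ "d * c"])
  next
    assume "\<exists>d. d \<noteq> 0 \<and> x = d *s v"
    then obtain d where "d \<noteq> 0" "x = (d / c) *s (c *s v)" using assms by (auto simp: vector_smult_assoc)
    then show "\<exists>d. d \<noteq> 0 \<and> x = d *s (c *s v)" using assms by (auto intro!: exI[of _ "d / c"])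
  qed
  then show "x \<in> proj (c *s v) \<longleftrightarrow> x \<in> proj v" by (simp add: mem_proj_iff)
qed

lemma proj_eq_iff: "proj v = proj w \<longleftrightarrow> (\<exists>c. c \<noteq> 0 \<and> w = c *s v)"
  by (metis mem_proj_iff proj_self proj_smult)

lemma image_proj:
  assumes hom: "\<And>c v. f (c *s v) = c *s f v"
  shows "f ` proj v = proj (f v)"
proof
  show "f ` proj v \<subseteq> proj (f v)" by (force simp: mem_proj_iff hom)
  show "proj (f v) \<subseteq> f ` proj v"
  proof
    fix x assume "x \<in> proj (f v)"
    then obtain c where "c \<noteq> 0" "x = c *s f v" by (auto simp: mem_proj_iff)
    then show "x \<in> f ` proj v" by (intro image_eqI[of _ _ "c *s v"]) (auto simp: hom mem_proj_iff)
  qed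
qed

lemma proj2_eq_iff_det:
  fixes u v :: "complex^2"
  assumes "u \<noteq> 0" "v \<noteq> 0"
  shows "proj u = proj v \<longleftrightarrow> u$1 * v$2 - u$2 * v$1 = 0"
proof
  assume "proj u = proj v"
  then obtain c where "v = c *s u" by (auto simp: proj_eq_iff)
  then show "u$1 * v$2 - u$2 * v$1 = 0" by (simp add: algebra_simps)
next
  assume d: "u$1 * v$2 - u$2 * v$1 = 0"
  obtain k where k: "u$k \<noteq> 0" "k = 1 \<or> k = 2"
    using assms(1) by (auto simp: vec2_neq_0_iff)
  have "v = (v$k / u$k) *s u" using d k by (auto simp: vec2_eq_iff field_simps)
  moreover have "v$k / u$k \<noteq> 0" using assms(2) calculation by auto
  ultimately show "proj u = proj v" unfolding proj_eq_iff by blast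
qed

definition det3 :: "complex^3 \<Rightarrow> complex^3 \<Rightarrow> complex^3 \<Rightarrow> complex" where
  "det3 a b c = a$1*(b$2*c$3 - b$3*c$2) - a$2*(b$1*c$3 - b$3*c$1) + a$3*(b$1*c$2 - b$2*c$1)"

definition cross3 :: "complex^3 \<Rightarrow> complex^3 \<Rightarrow> complex^3" where
  "cross3 a b = vector [a$2*b$3 - a$3*b$2, a$3*b$1 - a$1*b$3, a$1*b$2 - a$2*b$1]"

definition dot3 :: "complex^3 \<Rightarrow> complex^3 \<Rightarrow> complex" where
  "dot3 a b = a$1*b$1 + a$2*b$2 + a$3*b$3"

lemma det3_eq_dot3_cross3: "det3 a b c = dot3 (cross3 a b) c"
  unfolding det3_def dot3_def cross3_def by (simp add: algebra_simps)

lemma det3_cramer: "det3 Q L t *s Y = det3 Y L t *s Q + det3 Q Y t *s L + det3 Q L Y *s t"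
  unfolding vec3_eq_iff det3_def by (simp; algebra)

lemma det3_linear3: "det3 Q L (a *s x + b *s y) = a * det3 Q L x + b * det3 Q L y"
  unfolding det3_def by (simp; algebra)

lemma det3_smult3: "det3 Q L (k *s t) = k * det3 Q L t"
  unfolding det3_def by (simp add: algebra_simps)

lemma det3_repeated: "det3 Q L Q = 0" "det3 Q L L = 0"
  unfolding det3_def by algebra+

lemma dot3_linear: "dot3 n (a *s x + b *s y) = a * dot3 n x + b * dot3 n y"
  unfolding dot3_def by (simp add: algebra_simps)

lemma dot3_add_left: "dot3 (x + y) t = dot3 x t + dot3 y t"
  unfolding dot3_def by (simp add: algebra_simps)

lemma dot3_diff_left: "dot3 (x - y) t = dot3 x t - dot3 y t"
  unfolding dot3_def by (simp add: algebra_simps)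

lemma dot3_smult_left: "dot3 (a *s n) t = a * dot3 n t"
  unfolding dot3_def by (simp add: algebra_simps)

lemma det3_bilinear23: "det3 Q (a *s U + b *s V) (c *s U + d *s V) = (a * d - b * c) * det3 Q U V"
  unfolding det3_def by (simp; algebra)

lemma dot3_nonzero_witness:
  assumes "(c::complex^3) \<noteq> 0"
  obtains T where "dot3 c T \<noteq> 0"
proof -
  obtain k where "c$k \<noteq> 0" using assms by (auto simp: vec_eq_iff)
  moreover have "k = 1 \<or> k = 2 \<or> k = 3" by (rule exhaust_3)
  ultimately have "dot3 c (\<chi> i. if i = k then 1 else 0) \<noteq> 0"
    by (auto simp: dot3_def)
  then show ?thesis using that by blast
qed

lemma indep2_coeffs_unique:
  assumes "indep2 Q L" "a *s Q + b *s L = a' *s Q + b' *s L"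
  shows "a = a'" "b = b'"
proof -
  have "(a - a') *s Q + (b - b') *s L = 0" using assms(2)
    by (simp add: vec_eq_iff algebra_simps)
  then have "a - a' = 0 \<and> b - b' = 0" using assms(1) unfolding indep2_def by blast
  then show "a = a'" "b = b'" by auto
qed

lemma cross3_nonzero:
  assumes "indep2 Q L"
  shows "cross3 Q L \<noteq> 0"
proof
  assume "cross3 Q L = 0"
  then have c: "Q$2*L$3 = Q$3*L$2" "Q$3*L$1 = Q$1*L$3" "Q$1*L$2 = Q$2*L$1"
    by (simp_all add: cross3_def vec3_eq_iff)
  show False
  proof (cases "Q = 0")
    case True
    then have "1 *s Q + 0 *s L = 0" by simp
    then show False using assms unfolding indep2_def by fastforce
  next
    case False
    then obtain k where k: "Q$k \<noteq> 0" by (auto simp: vec_eq_iff)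
    have "k = 1 \<or> k = 2 \<or> k = 3" by (rule exhaust_3)
    then have "(L$k / Q$k) *s Q + (-1) *s L = 0"
      using k c by (auto simp: vec3_eq_iff field_simps)
    then show False using assms unfolding indep2_def by fastforce
  qed
qed

lemma det3_eq_0_imp_span:
  assumes "indep2 Q L" "det3 Q L t = 0"
  obtains s u where "t = s *s Q + u *s L"
proof -
  obtain Y where Y: "det3 Q L Y \<noteq> 0"
    using dot3_nonzero_witness[OF cross3_nonzero[OF assms(1)]] by (metis det3_eq_dot3_cross3)
  have c: "0 = det3 Y L t *s Q + det3 Q Y t *s L + det3 Q L Y *s t"
    using det3_cramer[of Q L t Y] assms(2) by simp
  have "t = (- det3 Y L t / det3 Q L Y) *s Q + (- det3 Q Y t / det3 Q L Y) *s L"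
  proof (subst vec_eq_iff, intro allI)
    fix i
    have "0 = det3 Y L t * Q$i + det3 Q Y t * L$i + det3 Q L Y * t$i"
      using arg_cong[where f="\<lambda>x. x$i", OF c] by simp
    then have "t$i * det3 Q L Y = - (det3 Y L t * Q$i + det3 Q Y t * L$i)" by algebra
    then show "t$i = ((- det3 Y L t / det3 Q L Y) *s Q + (- det3 Q Y t / det3 Q L Y) *s L)$i"
      using Y by (simp add: field_simps)
  qed
  then show ?thesis using that by blast
qed

lemma orthogonal_imp_parallel_cross3:
  assumes "indep2 U V" "dot3 c U = 0" "dot3 c V = 0"
  obtains k where "c = k *s cross3 U V"
proof -
  let ?W = "cross3 U V"
  have W: "?W \<noteq> 0" using cross3_nonzero assms(1) by blast
  have "cross3 ?W c = 0"
    using assms(2,3) unfolding cross3_def dot3_def by (simp add: vec3_eq_iff; algebra)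
  then have z: "?W$2 * c$3 = ?W$3 * c$2" "?W$3 * c$1 = ?W$1 * c$3" "?W$1 * c$2 = ?W$2 * c$1"
    unfolding cross3_def[of ?W c] by (simp_all add: vec3_eq_iff)
  obtain j where j: "?W$j \<noteq> 0" using W by (auto simp: vec_eq_iff)
  have "j = 1 \<or> j = 2 \<or> j = 3" by (rule exhaust_3)
  then have "c = (c$j / ?W$j) *s ?W"
    using j z by (auto simp: vec3_eq_iff field_simps)
  then show ?thesis using that by blast
qed

lemma dual_basis_expansion:
  assumes D: "det3 U V T \<noteq> 0"
  shows "t = dot3 ((1 / det3 U V T) *s cross3 U V) t *s T
           + dot3 ((1 / det3 U V T) *s cross3 V T) t *s U
           + dot3 ((1 / det3 U V T) *s cross3 T U) t *s V"
proof -
  have c: "det3 U V T *s t = det3 t V T *s U + det3 U t T *s V + det3 U V t *s T"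
    using det3_cramer[of U V T t] .
  have "det3 t V T = dot3 (cross3 V T) t" "det3 U t T = dot3 (cross3 T U) t"
    "det3 U V t = dot3 (cross3 U V) t"
    unfolding det3_def dot3_def cross3_def by (simp; algebra)+
  moreover have "t = (1 / det3 U V T) *s (det3 U V T *s t)"
    using D by (simp add: vector_smult_assoc)
  ultimately show ?thesis
    unfolding c dot3_smult_left by (simp add: vec3_eq_iff algebra_simps)
qed

lemma orthogonal_indep2_pair:
  assumes "(c::complex^3) \<noteq> 0"
  obtains u1 u2 where "indep2 u1 u2" "dot3 c u1 = 0" "dot3 c u2 = 0"
proof (cases "c$1 = 0")
  case False
  have "indep2 (vector [- c$2, c$1, 0]) (vector [- c$3, 0, c$1])"
    unfolding indep2_def using False by (auto simp: vec3_eq_iff)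
  then show ?thesis using that by (simp add: dot3_def algebra_simps)
next
  case c1: True
  show ?thesis
  proof (cases "c$2 = 0")
    case False
    have "indep2 (vector [1, 0, 0]) (vector [0, - c$3, c$2])"
      unfolding indep2_def using False by (auto simp: vec3_eq_iff)
    then show ?thesis using that c1 by (simp add: dot3_def algebra_simps)
  next
    case True
    have "indep2 (vector [1, 0, 0]) (vector [0, 1, 0])"
      unfolding indep2_def by (auto simp: vec3_eq_iff)
    then show ?thesis using that c1 True by (simp add: dot3_def)
  qed
qed

section \<open>The fibres of \<open>\<pi>\<close> and the branch locus\<close>

definition quad_part :: "(3 \<Rightarrow> complex^5) \<Rightarrow> complex^2 \<Rightarrow> complex^3" where
  "quad_part qs w = (\<chi> i. qs i$1 * (w$1)^2 + qs i$2 * w$1 * w$2 + qs i$3 * (w$2)^2)"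

definition lin_part :: "(3 \<Rightarrow> complex^5) \<Rightarrow> complex^2 \<Rightarrow> complex^3" where
  "lin_part qs w = (\<chi> i. linE (qs i) w)"

text \<open>\<open>\<pi>\<close> maps the fibre of \<open>\<bbbF>\<^sub>1 \<rightarrow> \<P>\<^sup>1\<close> over \<open>[w]\<close> onto the line through
  \<open>quad_part qs w\<close> and \<open>lin_part qs w\<close>; this line passes through \<open>[t]\<close> iff the binary cubic
  \<open>fibre_cubic qs t\<close> vanishes at \<open>w\<close>.\<close>

definition fibre_cubic :: "(3 \<Rightarrow> complex^5) \<Rightarrow> complex^3 \<Rightarrow> complex^2 \<Rightarrow> complex" where
  "fibre_cubic qs t w = det3 (quad_part qs w) (lin_part qs w) t"

definition fibre_cubic_roots :: "(3 \<Rightarrow> complex^5) \<Rightarrow> complex^3 \<Rightarrow> (complex^2) set set" where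
  "fibre_cubic_roots qs t = {proj w | w. w \<noteq> 0 \<and> fibre_cubic qs t w = 0}"

definition fibre :: "(3 \<Rightarrow> complex^5) \<Rightarrow> complex^3 \<Rightarrow> f1pt set" where
  "fibre qs t = {P \<in> F1. maps_to qs P t}"

definition pr12 :: "complex^3 \<Rightarrow> complex^2" where
  "pr12 v = vector [v$1, v$2]"

definition lift3 :: "complex^2 \<Rightarrow> complex \<Rightarrow> complex^3" where
  "lift3 w x = vector [w$1, w$2, x]"

text \<open>The point \<open>[w]\<close> of \<open>\<P>\<^sup>1\<close> under \<open>P\<close>, i.e. the ruling of \<open>\<bbbF>\<^sub>1\<close> through \<open>P\<close>.\<close>

definition ruling :: "f1pt \<Rightarrow> (complex^2) set" where
  "ruling P = (case P of Off S \<Rightarrow> pr12 ` S | OnE S \<Rightarrow> S)"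

lemma pr12_lift3 [simp]: "pr12 (lift3 w x) = w"
  unfolding pr12_def lift3_def by (simp add: vec2_eq_iff)

lemma lift3_nth3 [simp]: "lift3 w x $ 3 = x"
  unfolding lift3_def by simp

lemma lift3_pr12: "lift3 (pr12 v) (v$3) = v"
  unfolding pr12_def lift3_def by (simp add: vec3_eq_iff)

lemma lift3_smult: "lift3 (c *s w) (c * x) = c *s lift3 w x"
  unfolding lift3_def by (simp add: vec3_eq_iff)

lemma pr12_smult: "pr12 (c *s v) = c *s pr12 v"
  unfolding pr12_def by (simp add: vec2_eq_iff)

lemma quad_part_smult: "quad_part qs (c *s w) = c^2 *s quad_part qs w"
  unfolding quad_part_def by (simp add: vec_eq_iff algebra_simps power2_eq_square)

lemma lin_part_smult: "lin_part qs (c *s w) = c *s lin_part qs w"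
  unfolding lin_part_def linE_def by (simp add: vec_eq_iff algebra_simps)

lemma evalq_smult: "evalq q (c *s v) = c^2 * evalq q v"
  unfolding evalq_def by (simp add: algebra_simps power2_eq_square)

lemma linE_smult: "linE q (c *s w) = c * linE q w"
  unfolding linE_def by (simp add: algebra_simps)

lemma evalq_split:
  "(\<chi> i. evalq (qs i) v) = quad_part qs (pr12 v) + v$3 *s lin_part qs (pr12 v)"
  unfolding evalq_def quad_part_def lin_part_def linE_def pr12_def
  by (simp add: vec_eq_iff algebra_simps)

lemma ruling_Off: "ruling (Off (proj (lift3 w x))) = proj w"
  unfolding ruling_def by (simp add: image_proj pr12_smult)

lemma ruling_OnE: "ruling (OnE S) = S"
  unfolding ruling_def by simp

lemma quad_lin_part_indep2:
  assumes bpf: "base_point_free qs" and w: "w \<noteq> 0"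
  shows "indep2 (quad_part qs w) (lin_part qs w)"
  unfolding indep2_def
proof (intro allI impI)
  fix s u assume su: "s *s quad_part qs w + u *s lin_part qs w = 0"
  show "s = 0 \<and> u = 0"
  proof (rule ccontr)
    assume nz: "\<not> (s = 0 \<and> u = 0)"
    show False
    proof (cases "s = 0")
      case False
      define v where "v = lift3 (s *s w) u"
      have "(v$1, v$2) \<noteq> (0, 0)" using w False unfolding v_def lift3_def by (auto simp: vec2_eq_iff)
      then have P: "Off (proj v) \<in> F1" unfolding F1_def by blast
      have "(\<chi> i. evalq (qs i) v) = s *s (s *s quad_part qs w + u *s lin_part qs w)"
        unfolding evalq_split v_def
        by (simp add: quad_part_smult lin_part_smult vec_eq_iff power2_eq_square algebra_simps)
      then have "evalq (qs i) v = 0" for i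
        using su by (metis vec_lambda_beta vector_smult_component mult_zero_right zero_index)
      then have "vanishes (qs i) (Off (proj v))" for i
        unfolding vanishes_def by (auto simp: mem_proj_iff evalq_smult)
      then show False using bpf P unfolding base_point_free_def by blast
    next
      case True
      then have "lin_part qs w = 0" using nz su by auto
      then have "linE (qs i) w = 0" for i unfolding lin_part_def by (metis vec_lambda_beta zero_index)
      then have "vanishes (qs i) (OnE (proj w))" for i
        unfolding vanishes_def by (auto simp: mem_proj_iff linE_smult)
      moreover have "OnE (proj w) \<in> F1" unfolding F1_def using w by blast
      ultimately show False using bpf unfolding base_point_free_def by blast
    qed
  qed
qed

lemma fibre_cases:
  assumes "P \<in> fibre qs t"
  obtains (Off) w x k where "w \<noteq> 0" "k \<noteq> 0" "P = Off (proj (lift3 w x))"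
      "quad_part qs w + x *s lin_part qs w = k *s t"
    | (OnE) w k where "w \<noteq> 0" "k \<noteq> 0" "P = OnE (proj w)" "lin_part qs w = k *s t"
proof -
  have P: "P \<in> F1" "maps_to qs P t" using assms unfolding fibre_def by auto
  from P(1) show ?thesis unfolding F1_def
  proof (elim UnE CollectE exE conjE)
    fix v :: "complex^3" assume Pv: "P = Off (proj v)" and v: "(v$1, v$2) \<noteq> (0, 0)"
    from P(2) obtain v' where v': "v' \<in> proj v" "(\<chi> i. evalq (qs i) v') \<in> proj t"
      unfolding Pv maps_to_def by auto
    obtain c where c: "c \<noteq> 0" "v' = c *s v" using v'(1) by (auto simp: mem_proj_iff)
    obtain k where k: "k \<noteq> 0" "(\<chi> i. evalq (qs i) v') = k *s t" using v'(2) by (auto simp: mem_proj_iff)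
    have "pr12 v' \<noteq> 0" using c v unfolding pr12_def by (auto simp: vec2_eq_iff)
    moreover have "P = Off (proj (lift3 (pr12 v') (v'$3)))"
      unfolding lift3_pr12 Pv using c proj_smult by metis
    moreover have "quad_part qs (pr12 v') + (v'$3) *s lin_part qs (pr12 v') = k *s t"
      using k evalq_split by metis
    ultimately show ?thesis using k(1) Off by blast
  next
    fix w :: "complex^2" assume Pw: "P = OnE (proj w)" and w: "w \<noteq> 0"
    from P(2) obtain w' where w': "w' \<in> proj w" "(\<chi> i. linE (qs i) w') \<in> proj t"
      unfolding Pw maps_to_def by auto
    obtain c where c: "c \<noteq> 0" "w' = c *s w" using w'(1) by (auto simp: mem_proj_iff)
    obtain k where k: "k \<noteq> 0" "lin_part qs w' = k *s t"
      using w'(2) by (auto simp: mem_proj_iff lin_part_def)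
    have "w' \<noteq> 0" using c w by simp
    moreover have "P = OnE (proj w')" using Pw c proj_smult by metis
    ultimately show ?thesis using k OnE by blast
  qed
qed

lemma ruling_in_fibre_cubic_roots:
  assumes "P \<in> fibre qs t"
  shows "ruling P \<in> fibre_cubic_roots qs t"
  using assms
proof (cases rule: fibre_cases)
  case (Off w x k)
  have "k * fibre_cubic qs t w
      = det3 (quad_part qs w) (lin_part qs w) (1 *s quad_part qs w + x *s lin_part qs w)"
    unfolding fibre_cubic_def det3_smult3[symmetric] using Off(4) by simp
  also have "\<dots> = 0" by (simp only: det3_linear3 det3_repeated) simp
  finally have "fibre_cubic qs t w = 0" using Off(2) by simp
  then show ?thesis unfolding fibre_cubic_roots_def Off(3) ruling_Off using Off(1) by blast
next
  case (OnE w k)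
  have "k * fibre_cubic qs t w = det3 (quad_part qs w) (lin_part qs w) (lin_part qs w)"
    unfolding fibre_cubic_def det3_smult3[symmetric] using OnE(4) by simp
  then have "fibre_cubic qs t w = 0" using OnE(2) by (simp add: det3_repeated)
  then show ?thesis unfolding fibre_cubic_roots_def OnE(3) ruling_OnE using OnE(1) by blast
qed

text \<open>Two points of a fibre of \<open>\<pi>\<close> on the same ruling coincide, because \<open>\<pi>\<close> embeds each
  ruling as a line (\<open>quad_part\<close> and \<open>lin_part\<close> are independent).\<close>

lemma fibre_Off_Off_eq:
  assumes bpf: "base_point_free qs" and w: "w \<noteq> 0" and c: "c \<noteq> 0" and k: "k \<noteq> 0"
    and P: "quad_part qs w + x *s lin_part qs w = k *s t"
    and P': "quad_part qs (c *s w) + x' *s lin_part qs (c *s w) = k' *s t"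
  shows "proj (lift3 w x) = proj (lift3 (c *s w) x')"
proof -
  have "c^2 *s quad_part qs w + (c * x') *s lin_part qs w
      = (k'/k) *s quad_part qs w + (k'/k * x) *s lin_part qs w"
    using P' arg_cong[where f="\<lambda>v. (k'/k) *s v", OF P] k
    by (simp add: quad_part_smult lin_part_smult vector_smult_assoc vector_add_ldistrib
        mult.commute[of c x'])
  from indep2_coeffs_unique[OF quad_lin_part_indep2[OF bpf w] this]
  have "c * x' = c * (c * x)" by (metis mult.assoc power2_eq_square)
  then have "lift3 (c *s w) x' = c *s lift3 w x" using c lift3_smult by simp
  then show ?thesis using c proj_smult by metis
qed

lemma fibre_Off_OnE_disjoint:
  assumes bpf: "base_point_free qs" and w: "w \<noteq> 0" and c: "c \<noteq> 0"
    and k: "k \<noteq> 0" "k' \<noteq> 0"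
    and P: "quad_part qs w + x *s lin_part qs w = k *s t"
    and P': "lin_part qs (c *s w) = k' *s t"
  shows False
proof -
  have "0 *s quad_part qs w + c *s lin_part qs w
      = (k'/k) *s quad_part qs w + (k'/k * x) *s lin_part qs w"
    using P' arg_cong[where f="\<lambda>v. (k'/k) *s v", OF P] k
    by (simp add: lin_part_smult vector_smult_assoc vector_add_ldistrib)
  from indep2_coeffs_unique(1)[OF quad_lin_part_indep2[OF bpf w] this] show False
    using k by simp
qed

lemma inj_on_ruling_fibre:
  assumes bpf: "base_point_free qs"
  shows "inj_on ruling (fibre qs t)"
proof (rule inj_onI)
  fix P1 P2 assume P1: "P1 \<in> fibre qs t" and P2: "P2 \<in> fibre qs t"
    and eq: "ruling P1 = ruling P2"
  show "P1 = P2"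
    using P1
  proof (cases rule: fibre_cases)
    case a: (Off w x k)
    show ?thesis using P2
    proof (cases rule: fibre_cases)
      case b: (Off w' x' k')
      obtain c where "c \<noteq> 0" "w' = c *s w"
        using eq a(3) b(3) by (auto simp: ruling_Off proj_eq_iff)
      then show ?thesis using fibre_Off_Off_eq[OF bpf a(1) _ a(2,4)] b(4) a(3) b(3) by blast
    next
      case b: (OnE w' k')
      obtain c where "c \<noteq> 0" "w' = c *s w"
        using eq a(3) b(3) by (auto simp: ruling_Off ruling_OnE proj_eq_iff)
      then show ?thesis using fibre_Off_OnE_disjoint[OF bpf a(1) _ a(2) b(2) a(4)] b(4) by blast
    qed
  next
    case a: (OnE w k)
    show ?thesis using P2
    proof (cases rule: fibre_cases)
      case b: (Off w' x' k')
      obtain c where "c \<noteq> 0" "w = c *s w'"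
        using eq[symmetric] a(3) b(3) by (auto simp: ruling_Off ruling_OnE proj_eq_iff)
      then show ?thesis using fibre_Off_OnE_disjoint[OF bpf b(1) _ b(2) a(2) b(4)] a(4) by blast
    next
      case b: (OnE w' k')
      then show ?thesis using eq a(3) by (simp add: ruling_OnE)
    qed
  qed
qed

lemma fibre_cubic_roots_subset_ruling_fibre:
  assumes bpf: "base_point_free qs" and t: "t \<noteq> 0" and R: "S \<in> fibre_cubic_roots qs t"
  shows "S \<in> ruling ` fibre qs t"
proof -
  obtain w where w: "S = proj w" "w \<noteq> 0" "fibre_cubic qs t w = 0"
    using R unfolding fibre_cubic_roots_def by auto
  obtain s u where su: "t = s *s quad_part qs w + u *s lin_part qs w"
    using w(3) unfolding fibre_cubic_def
    by (rule det3_eq_0_imp_span[OF quad_lin_part_indep2[OF bpf w(2)]])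
  show ?thesis
  proof (cases "s = 0")
    case False
    define v where "v = lift3 w (u/s)"
    have "Off (proj v) \<in> F1"
      unfolding F1_def v_def lift3_def using w(2) by (auto simp: vec2_eq_iff)
    moreover have "(\<chi> i. evalq (qs i) v) = (1/s) *s t"
      unfolding evalq_split v_def su using False
      by (simp add: vector_add_ldistrib vector_smult_assoc)
    then have "maps_to qs (Off (proj v)) t"
      unfolding maps_to_def using False
      by (auto simp: mem_proj_iff intro!: bexI[OF _ proj_self] exI[of _ "1/s"])
    moreover have "ruling (Off (proj v)) = S" unfolding v_def ruling_Off w(1) ..
    ultimately show ?thesis unfolding fibre_def by blast
  next
    case True
    then have u: "u \<noteq> 0" using t su by auto
    have "OnE (proj w) \<in> F1" unfolding F1_def using w(2) by auto
    moreover have "(\<chi> i. linE (qs i) w) = (1/u) *s t"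
      using su True u by (simp add: lin_part_def[symmetric] vector_smult_assoc)
    then have "maps_to qs (OnE (proj w)) t"
      unfolding maps_to_def using u
      by (auto simp: mem_proj_iff intro!: bexI[OF _ proj_self] exI[of _ "1/u"])
    moreover have "ruling (OnE (proj w)) = S" unfolding w(1) ruling_OnE ..
    ultimately show ?thesis unfolding fibre_def by blast
  qed
qed

lemma card_fibre:
  assumes "base_point_free qs" "t \<noteq> 0"
  shows "card (fibre qs t) = card (fibre_cubic_roots qs t)"
proof -
  have "ruling ` fibre qs t = fibre_cubic_roots qs t"
    using ruling_in_fibre_cubic_roots fibre_cubic_roots_subset_ruling_fibre[OF assms] by blast
  moreover have "card (ruling ` fibre qs t) = card (fibre qs t)"
    by (rule card_image[OF inj_on_ruling_fibre[OF assms(1)]])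
  ultimately show ?thesis by simp
qed

lemma branch_eq_fibre_cubic_roots:
  assumes "base_point_free qs"
  shows "branch qs = {proj t | t. t \<noteq> 0 \<and> card (fibre_cubic_roots qs t) < 3}"
proof -
  have "card {P \<in> F1. maps_to qs P t} = card (fibre_cubic_roots qs t)" if "t \<noteq> 0" for t
    using card_fibre[OF assms that] unfolding fibre_def .
  then show ?thesis unfolding branch_def by (intro Collect_cong) auto
qed

section \<open>Binary cubics and their discriminant\<close>

definition bin_cubic :: "complex \<Rightarrow> complex \<Rightarrow> complex \<Rightarrow> complex \<Rightarrow> complex^2 \<Rightarrow> complex" where
  "bin_cubic p q r s w = p*(w$1)^3 + q*(w$1)^2*w$2 + r*w$1*(w$2)^2 + s*(w$2)^3"

definition cubic_disc :: "complex \<Rightarrow> complex \<Rightarrow> complex \<Rightarrow> complex \<Rightarrow> complex" where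
  "cubic_disc p q r s = q^2*r^2 - 4*p*r^3 - 4*q^3 * s - 27*p^2 * s^2 + 18*p*q*r * s"

definition bin_cubic_roots :: "complex \<Rightarrow> complex \<Rightarrow> complex \<Rightarrow> complex \<Rightarrow> (complex^2) set set" where
  "bin_cubic_roots p q r s = {proj w | w. w \<noteq> 0 \<and> bin_cubic p q r s w = 0}"

lemma binary_quadratic_splits:
  fixes p q r :: complex
  obtains a1 b1 a2 b2 where "p = a1*a2" "q = a1*b2 + b1*a2" "r = b1*b2"
proof (cases "p = 0")
  case True
  then have "p = 0 * q" "q = 0 * r + 1 * q" "r = 1 * r" by simp_all
  then show ?thesis by (rule that)
next
  case False
  define d where "d = csqrt (q^2 - 4*p*r)"
  define x where "x = (-q + d)/(2*p)"
  have "4*p*(p*x^2 + q*x + r) = (2*p*x)^2 + 2*q*(2*p*x) + 4*p*r"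
    by (simp add: algebra_simps power2_eq_square)
  also have "2*p*x = d - q" unfolding x_def using False by (simp add: field_simps)
  also have "(d - q)^2 + 2*q*(d - q) + 4*p*r = d^2 - q^2 + 4*p*r"
    by (simp add: algebra_simps power2_eq_square)
  also have "\<dots> = 0" unfolding d_def by simp
  finally have root: "p*x^2 + q*x + r = 0" using False by simp
  have "p = p * 1" by simp
  moreover have "q = p * (q / p + x) + (- p * x) * 1" using False by (simp add: field_simps)
  moreover have "r = (- p * x) * (q / p + x)"
    using root False by (simp add: field_simps power2_eq_square) algebra
  ultimately show ?thesis by (rule that)
qed

lemma binary_cubic_splits:
  fixes p q r s :: complex
  obtains a1 b1 a2 b2 a3 b3 where "p = a1*a2*a3" "q = a1*a2*b3 + a1*b2*a3 + b1*a2*a3"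
    "r = a1*b2*b3 + b1*a2*b3 + b1*b2*a3" "s = b1*b2*b3"
proof (cases "p = 0")
  case True
  obtain a1 b1 a2 b2 where "q = a1*a2" "r = a1*b2 + b1*a2" "s = b1*b2"
    by (rule binary_quadratic_splits)
  then have "p = a1 * a2 * 0" "q = a1 * a2 * 1 + a1 * b2 * 0 + b1 * a2 * 0"
    "r = a1 * b2 * 1 + b1 * a2 * 1 + b1 * b2 * 0" "s = b1 * b2 * 1"
    using True by simp_all
  then show ?thesis by (rule that)
next
  case False
  have "\<exists>x. poly [:s, r, q, p:] x = 0"
    by (rule fundamental_theorem_of_algebra_alt) (use False in auto)
  then obtain x where x: "s + x*(r + x*(q + x*p)) = 0" by auto
  obtain a1 b1 a2 b2 where f: "p = a1*a2" "q + p*x = a1*b2 + b1*a2" "r + q*x + p*x^2 = b1*b2"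
    by (rule binary_quadratic_splits)
  have "p = a1 * a2 * 1" using f(1) by simp
  moreover have "q = a1 * a2 * - x + a1 * b2 * 1 + b1 * a2 * 1" using f(1,2) by algebra
  moreover have "r = a1 * b2 * - x + b1 * a2 * - x + b1 * b2 * 1" using f by algebra
  moreover have "s = - x * (r + q*x + p*x^2)" using x by algebra
  then have "s = b1 * b2 * - x" using f(3) by simp
  ultimately show ?thesis by (rule that)
qed

lemma bin_cubic_split:
  "bin_cubic (a1*a2*a3) (a1*a2*b3 + a1*b2*a3 + b1*a2*a3) (a1*b2*b3 + b1*a2*b3 + b1*b2*a3) (b1*b2*b3) w
   = (a1 * w$1 + b1 * w$2) * (a2 * w$1 + b2 * w$2) * (a3 * w$1 + b3 * w$2)"
  unfolding bin_cubic_def by algebra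

lemma cubic_disc_split:
  "cubic_disc (a1*a2*a3) (a1*a2*b3 + a1*b2*a3 + b1*a2*a3) (a1*b2*b3 + b1*a2*b3 + b1*b2*a3) (b1*b2*b3)
   = ((a1*b2 - a2*b1)*(a1*b3 - a3*b1)*(a2*b3 - a3*b2))^2"
  unfolding cubic_disc_def by algebra

lemma cubic_disc_shift:
  "cubic_disc p q (3 * s * k) s = - s * (4 * (q - 3 * s * k^2)^3 + 27 * s * (p - k * q + 2 * s * k^3)^2)"
  unfolding cubic_disc_def by algebra

lemma bin_linear_roots:
  fixes a b :: complex
  assumes "a \<noteq> 0 \<or> b \<noteq> 0"
  shows "{proj w | w::complex^2. w \<noteq> 0 \<and> a * w$1 + b * w$2 = 0} = {proj (vector [b, -a])}"
proof -
  have nz: "(vector [b, -a] :: complex^2) \<noteq> 0" using assms by (auto simp: vec2_neq_0_iff)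
  have "proj w = proj (vector [b, -a])" if "w \<noteq> 0" "a * w$1 + b * w$2 = 0" for w :: "complex^2"
  proof -
    have "w$1 * (vector [b, -a]::complex^2)$2 - w$2 * (vector [b, -a]::complex^2)$1 = 0"
      using that(2) by simp algebra
    then show ?thesis using proj2_eq_iff_det[OF that(1) nz] by blast
  qed
  moreover have "proj (vector [b, -a]) \<in> {proj w | w::complex^2. w \<noteq> 0 \<and> a * w$1 + b * w$2 = 0}"
    using nz by (auto simp: algebra_simps)
  ultimately show ?thesis by blast
qed

lemma card_bin_cubic_roots_less_3_iff:
  assumes "\<not> (p = 0 \<and> q = 0 \<and> r = 0 \<and> s = 0)"
  shows "card (bin_cubic_roots p q r s) < 3 \<longleftrightarrow> cubic_disc p q r s = 0"
proof -
  obtain a1 b1 a2 b2 a3 b3 where f: "p = a1*a2*a3" "q = a1*a2*b3 + a1*b2*a3 + b1*a2*a3"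
      "r = a1*b2*b3 + b1*a2*b3 + b1*b2*a3" "s = b1*b2*b3"
    by (rule binary_cubic_splits)
  have n: "a1 \<noteq> 0 \<or> b1 \<noteq> 0" "a2 \<noteq> 0 \<or> b2 \<noteq> 0" "a3 \<noteq> 0 \<or> b3 \<noteq> 0"
    using assms unfolding f by auto
  define r1 r2 r3 :: "complex^2"
    where "r1 = vector [b1, -a1]" and "r2 = vector [b2, -a2]" and "r3 = vector [b3, -a3]"
  have z: "r1 \<noteq> 0" "r2 \<noteq> 0" "r3 \<noteq> 0"
    using n unfolding r1_def r2_def r3_def by (auto simp: vec2_neq_0_iff)
  have "bin_cubic_roots p q r s = {proj w | w::complex^2. w \<noteq> 0 \<and> a1 * w$1 + b1 * w$2 = 0}
      \<union> {proj w | w::complex^2. w \<noteq> 0 \<and> a2 * w$1 + b2 * w$2 = 0}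
      \<union> {proj w | w::complex^2. w \<noteq> 0 \<and> a3 * w$1 + b3 * w$2 = 0}"
    unfolding bin_cubic_roots_def f bin_cubic_split by auto
  also have "\<dots> = {proj r1, proj r2, proj r3}"
    unfolding bin_linear_roots[OF n(1)] bin_linear_roots[OF n(2)] bin_linear_roots[OF n(3)]
      r1_def r2_def r3_def by auto
  finally have "card (bin_cubic_roots p q r s) < 3 \<longleftrightarrow>
      proj r1 = proj r2 \<or> proj r1 = proj r3 \<or> proj r2 = proj r3"
    by (auto simp: card_insert_if)
  also have "\<dots> \<longleftrightarrow> (a1*b2 - a2*b1 = 0 \<or> a1*b3 - a3*b1 = 0 \<or> a2*b3 - a3*b2 = 0)"
    unfolding proj2_eq_iff_det[OF z(1,2)] proj2_eq_iff_det[OF z(1,3)] proj2_eq_iff_det[OF z(2,3)]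
    unfolding r1_def r2_def r3_def by (simp add: algebra_simps)
  also have "\<dots> \<longleftrightarrow> cubic_disc p q r s = 0" unfolding f cubic_disc_split by simp
  finally show ?thesis .
qed

lemma card_proj_zeros_comp:
  fixes g :: "complex^2 \<Rightarrow> complex^2"
  assumes "bij g" and hom: "\<And>c z. g (c *s z) = c *s g z"
  shows "card {proj w | w. w \<noteq> 0 \<and> F w = 0} = card {proj z | z. z \<noteq> 0 \<and> F (g z) = 0}"
proof -
  have "g 0 = 0" using hom[of 0 0] by simp
  then have "g z = 0 \<longleftrightarrow> z = 0" for z using bij_is_inj[OF \<open>bij g\<close>] by (metis injD)
  then have "{w. w \<noteq> 0 \<and> F w = 0} = g ` {z. z \<noteq> 0 \<and> F (g z) = 0}"
    using surj_image_vimage_eq[OF bij_is_surj[OF \<open>bij g\<close>], of "{w. w \<noteq> 0 \<and> F w = 0}"]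
    by (simp add: vimage_def)
  then have "{proj w | w. w \<noteq> 0 \<and> F w = 0} = (\<lambda>S. g ` S) ` {proj z | z. z \<noteq> 0 \<and> F (g z) = 0}"
    by (simp add: setcompr_eq_image image_image image_proj[OF hom])
  moreover have "inj_on ((`) g) X" for X
    using inj_on_image[of g] bij_is_inj[OF \<open>bij g\<close>] by (meson inj_on_subset subset_UNIV)
  ultimately show ?thesis by (simp add: card_image)
qed

definition lin2 :: "complex \<Rightarrow> complex \<Rightarrow> complex \<Rightarrow> complex \<Rightarrow> complex^2 \<Rightarrow> complex^2" where
  "lin2 m11 m12 m21 m22 z = vector [m11 * z$1 + m12 * z$2, m21 * z$1 + m22 * z$2]"

lemma lin2_smult: "lin2 m11 m12 m21 m22 (c *s z) = c *s lin2 m11 m12 m21 m22 z"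
  unfolding lin2_def by (simp add: vec2_eq_iff algebra_simps)

lemma bij_lin2:
  assumes "m11 * m22 - m12 * m21 \<noteq> 0"
  shows "bij (lin2 m11 m12 m21 m22)"
proof -
  define d where "d = m11 * m22 - m12 * m21"
  let ?inv = "lin2 (m22/d) (- m12/d) (- m21/d) (m11/d)"
  have "m11 * m22 - m12 * m21 = d" "d \<noteq> 0" using assms d_def by simp_all
  then have "lin2 m11 m12 m21 m22 (?inv w) = w" "?inv (lin2 m11 m12 m21 m22 w) = w" for w
    unfolding lin2_def vec2_eq_iff by (simp_all add: field_simps, algebra+)
  then show ?thesis by (intro o_bij[of ?inv]) auto
qed

lemma lin2_eq_0_iff:
  assumes "m11 * m22 - m12 * m21 \<noteq> 0"
  shows "lin2 m11 m12 m21 m22 z = 0 \<longleftrightarrow> z = 0"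
proof -
  have "lin2 m11 m12 m21 m22 0 = 0" by (simp add: lin2_def vec2_eq_iff)
  then show ?thesis using bij_is_inj[OF bij_lin2[OF assms]] by (metis injD)
qed

lemma bin_cubic_comp_lin2:
  obtains p' q' r' s' where
    "\<And>z. bin_cubic p q r s (lin2 m11 m12 m21 m22 z) = bin_cubic p' q' r' s' z"
proof
  show "bin_cubic p q r s (lin2 m11 m12 m21 m22 z) =
   bin_cubic (p*m11^3 + q*m11^2*m21 + r*m11*m21^2 + s*m21^3)
        (3*p*m11^2*m12 + q*(m11^2*m22 + 2*m11*m12*m21) + r*(m12*m21^2 + 2*m11*m21*m22) + 3 * s*m21^2*m22)
        (3*p*m11*m12^2 + q*(2*m11*m12*m22 + m12^2*m21) + r*(m11*m22^2 + 2*m12*m21*m22) + 3 * s*m21*m22^2)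
        (p*m12^3 + q*m12^2*m22 + r*m12*m22^2 + s*m22^3) z" for z
    unfolding bin_cubic_def lin2_def by simp algebra
qed

definition monomials :: "nat \<Rightarrow> (nat \<times> nat \<times> nat) set" where
  "monomials d = {(i, j, k). i + j + k = d}"

definition monom3 :: "complex^3 \<Rightarrow> nat \<times> nat \<times> nat \<Rightarrow> complex" where
  "monom3 v = (\<lambda>(i, j, k). (v$1)^i * (v$2)^j * (v$3)^k)"

definition homogeneous :: "nat \<Rightarrow> (complex^3 \<Rightarrow> complex) \<Rightarrow> bool" where
  "homogeneous d f = (\<exists>c. \<forall>v. f v = (\<Sum>x\<in>monomials d. c x * monom3 v x))"

lemma finite_monomials: "finite (monomials d)"
proof -
  have "monomials d \<subseteq> {0..d} \<times> {0..d} \<times> {0..d}" unfolding monomials_def by auto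
  then show ?thesis by (rule finite_subset) auto
qed

lemma is_form_iff_homogeneous: "is_form d f \<longleftrightarrow> homogeneous d f \<and> (\<exists>v. f v \<noteq> 0)"
proof -
  have sum_eq: "(\<Sum>(i,j,k)\<in>{(i,j,k). i + j + k = d}. c (i,j,k) * (v$1)^i * (v$2)^j * (v$3)^k)
      = (\<Sum>x\<in>monomials d. c x * monom3 v x)" for c v
    unfolding monomials_def monom3_def by (rule sum.cong) (auto simp: mult.assoc)
  have "(\<exists>c :: nat \<Rightarrow> nat \<Rightarrow> nat \<Rightarrow> complex.
        \<forall>v. f v = (\<Sum>(i,j,k)\<in>{(i,j,k). i + j + k = d}. c i j k * (v$1)^i * (v$2)^j * (v$3)^k))
        \<longleftrightarrow> homogeneous d f"
  proof
    assume "\<exists>c :: nat \<Rightarrow> nat \<Rightarrow> nat \<Rightarrow> complex.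
        \<forall>v. f v = (\<Sum>(i,j,k)\<in>{(i,j,k). i + j + k = d}. c i j k * (v$1)^i * (v$2)^j * (v$3)^k)"
    then obtain c :: "nat \<Rightarrow> nat \<Rightarrow> nat \<Rightarrow> complex" where
      "\<forall>v. f v = (\<Sum>(i,j,k)\<in>{(i,j,k). i + j + k = d}. c i j k * (v$1)^i * (v$2)^j * (v$3)^k)"
      by blast
    then have "\<forall>v. f v = (\<Sum>x\<in>monomials d. (\<lambda>(i,j,k). c i j k) x * monom3 v x)"
      using sum_eq[of "\<lambda>(i,j,k). c i j k"] by simp
    then show "homogeneous d f" unfolding homogeneous_def by blast
  next
    assume "homogeneous d f"
    then obtain c where "\<forall>v. f v = (\<Sum>x\<in>monomials d. c x * monom3 v x)"
      unfolding homogeneous_def by blast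
    then show "\<exists>c :: nat \<Rightarrow> nat \<Rightarrow> nat \<Rightarrow> complex.
        \<forall>v. f v = (\<Sum>(i,j,k)\<in>{(i,j,k). i + j + k = d}. c i j k * (v$1)^i * (v$2)^j * (v$3)^k)"
      using sum_eq[of c] by (intro exI[of _ "\<lambda>i j k. c (i,j,k)"]) simp
  qed
  then show ?thesis unfolding is_form_def by blast
qed

lemma homogeneous_const: "homogeneous 0 (\<lambda>v. a)"
proof -
  have "monomials 0 = {(0, 0, 0)}" unfolding monomials_def by auto
  then show ?thesis unfolding homogeneous_def monom3_def by (intro exI[of _ "\<lambda>_. a"]) simp
qed

lemma homogeneous_add: "homogeneous d f \<Longrightarrow> homogeneous d g \<Longrightarrow> homogeneous d (\<lambda>v. f v + g v)"
  unfolding homogeneous_def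
proof (elim exE)
  fix c c' assume "\<forall>v. f v = (\<Sum>x\<in>monomials d. c x * monom3 v x)"
    "\<forall>v. g v = (\<Sum>x\<in>monomials d. c' x * monom3 v x)"
  then show "\<exists>c. \<forall>v. f v + g v = (\<Sum>x\<in>monomials d. c x * monom3 v x)"
    by (intro exI[of _ "\<lambda>x. c x + c' x"]) (simp add: sum.distrib distrib_right)
qed

lemma homogeneous_smult: "homogeneous d f \<Longrightarrow> homogeneous d (\<lambda>v. a * f v)"
  unfolding homogeneous_def
proof (elim exE)
  fix c assume "\<forall>v. f v = (\<Sum>x\<in>monomials d. c x * monom3 v x)"
  then show "\<exists>c. \<forall>v. a * f v = (\<Sum>x\<in>monomials d. c x * monom3 v x)"
    by (intro exI[of _ "\<lambda>x. a * c x"]) (simp add: sum_distrib_left mult.assoc)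
qed

lemma homogeneous_mult_shift:
  assumes inj: "inj sh" and sh: "sh ` monomials d \<subseteq> monomials e"
    and monom3_sh: "\<And>v x. monom3 v (sh x) = m v * monom3 v x"
    and hf: "homogeneous d f"
  shows "homogeneous e (\<lambda>v. m v * f v)"
proof -
  obtain c where c: "\<And>v. f v = (\<Sum>x\<in>monomials d. c x * monom3 v x)"
    using hf unfolding homogeneous_def by blast
  define c' where "c' = (\<lambda>y. if y \<in> sh ` monomials d then c (inv sh y) else 0)"
  have "m v * f v = (\<Sum>x\<in>monomials e. c' x * monom3 v x)" for v
  proof -
    have "m v * f v = (\<Sum>x\<in>monomials d. c' (sh x) * monom3 v (sh x))"
      unfolding c by (simp add: sum_distrib_left monom3_sh c'_def inv_f_f[OF inj] ac_simps)
    also have "\<dots> = (\<Sum>y\<in>sh ` monomials d. c' y * monom3 v y)"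
      by (simp only: sum.reindex[OF inj_on_subset[OF inj subset_UNIV]] o_def)
    also have "\<dots> = (\<Sum>y\<in>monomials e. c' y * monom3 v y)"
      by (rule sum.mono_neutral_left) (auto simp: finite_monomials sh c'_def)
    finally show ?thesis .
  qed
  then show ?thesis unfolding homogeneous_def by blast
qed

lemma homogeneous_mult_coords:
  assumes "homogeneous d f"
  shows "homogeneous (Suc d) (\<lambda>v. v$1 * f v)" "homogeneous (Suc d) (\<lambda>v. v$2 * f v)"
    "homogeneous (Suc d) (\<lambda>v. v$3 * f v)"
  by (rule homogeneous_mult_shift[where sh = "\<lambda>(i, j, k). (Suc i, j, k)", OF _ _ _ assms]
        homogeneous_mult_shift[where sh = "\<lambda>(i, j, k). (i, Suc j, k)", OF _ _ _ assms]
        homogeneous_mult_shift[where sh = "\<lambda>(i, j, k). (i, j, Suc k)", OF _ _ _ assms];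
      auto simp: inj_def monomials_def monom3_def)+

lemma homogeneous_mult_linear: "homogeneous d f \<Longrightarrow> homogeneous (Suc d) (\<lambda>v. dot3 n v * f v)"
  unfolding dot3_def distrib_right mult.assoc
  by (intro homogeneous_add homogeneous_smult homogeneous_mult_coords)

lemma linear_form_eq_dot3:
  assumes "is_form 1 l"
  obtains c where "c \<noteq> 0" "\<And>v. l v = dot3 c v"
proof -
  obtain c where c: "\<And>v. l v = (\<Sum>x\<in>monomials 1. c x * monom3 v x)" and nz: "\<exists>v. l v \<noteq> 0"
    using assms unfolding is_form_iff_homogeneous homogeneous_def by blast
  have "monomials 1 = {(1,0,0), (0,1,0), (0,0,1)}" unfolding monomials_def by (auto simp: add_is_1)
  then have l: "l v = dot3 (vector [c (1,0,0), c (0,1,0), c (0,0,1)]) v" for v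
    unfolding c dot3_def monom3_def by simp
  moreover have "vector [c (1,0,0), c (0,1,0), c (0,0,1)] \<noteq> (0::complex^3)"
  proof
    assume z: "vector [c (1,0,0), c (0,1,0), c (0,0,1)] = (0::complex^3)"
    have "l v = 0" for v unfolding l z by (simp add: dot3_def)
    then show False using nz by blast
  qed
  ultimately show ?thesis using that by blast
qed

lemma nonvanishing_on_line:
  assumes "indep2 u1 u2" and H: "\<And>n. n \<noteq> 0 \<Longrightarrow> \<exists>v. dot3 n v = 0 \<and> F v \<noteq> 0"
  obtains a b where "F (a *s u1 + b *s u2) \<noteq> 0"
proof -
  obtain v where v: "det3 u1 u2 v = 0" "F v \<noteq> 0"
    using H[OF cross3_nonzero[OF assms(1)]] by (auto simp: det3_eq_dot3_cross3)
  obtain a b where "v = a *s u1 + b *s u2" using det3_eq_0_imp_span[OF assms(1) v(1)] .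
  then show ?thesis using v(2) that by blast
qed

definition contains_line :: "(complex^3) set set \<Rightarrow> bool" where
  "contains_line C = (\<exists>P Q. indep2 P Q \<and> lineset P Q \<subseteq> C)"

definition cuspidal_cubic_and_flex_tangent :: "(complex^3) set set \<Rightarrow> bool" where
  "cuspidal_cubic_and_flex_tangent C =
     (\<exists>f P Q. cuspidal_cubic f \<and> flex_pt f P \<and> (\<forall>P'. flex_pt f P' \<longrightarrow> proj P' = proj P)
        \<and> indep2 P Q \<and> contact f P Q 2 \<and> C = zeroset f \<union> lineset P Q)"

lemma contains_line_if_cuspidal_cubic_and_flex_tangent:
  "cuspidal_cubic_and_flex_tangent C \<Longrightarrow> contains_line C"
  unfolding cuspidal_cubic_and_flex_tangent_def contains_line_def by blast

lemma not_contains_line_zeroset: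
  assumes hom: "\<And>c v. F (c *s v) = c^d * F v" and d: "0 < d"
    and nonvanishing: "\<And>n. n \<noteq> 0 \<Longrightarrow> \<exists>v. dot3 n v = 0 \<and> F v \<noteq> 0"
  shows "\<not> contains_line {proj v | v. v \<noteq> 0 \<and> F v = 0}"
proof
  assume "contains_line {proj v | v. v \<noteq> 0 \<and> F v = 0}"
  then obtain P Q where PQ: "indep2 P Q" "lineset P Q \<subseteq> {proj v | v. v \<noteq> 0 \<and> F v = 0}"
    unfolding contains_line_def by blast
  have "F (a *s P + b *s Q) = 0" for a b
  proof (cases "(a, b) = (0, 0)")
    case True
    then show ?thesis using hom[of 0 0] d by (simp add: zero_power)
  next
    case False
    then obtain v where "proj v = proj (a *s P + b *s Q)" "F v = 0"
      using PQ(2) unfolding lineset_def by blast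
    then show ?thesis using hom by (auto simp: proj_eq_iff)
  qed
  moreover obtain a b where "F (a *s P + b *s Q) \<noteq> 0"
    by (rule nonvanishing_on_line[OF PQ(1) nonvanishing])
  ultimately show False by simp
qed

lemma contact_iff_coeffs:
  assumes "\<And>s. f (P + s *s Q) = c0 + c1 * s + c2 * s^2 + c3 * s^3"
  shows "contact f P Q k \<longleftrightarrow> (\<forall>i<k. coeff [:c0, c1, c2, c3:] i = 0)"
proof -
  have pp: "f (P + s *s Q) = poly [:c0, c1, c2, c3:] s" for s
    using assms[of s] by (simp add: algebra_simps power2_eq_square power3_eq_cube)
  have "contact f P Q k \<longleftrightarrow> [:0, 1:] ^ k dvd [:c0, c1, c2, c3:]"
  proof
    assume "contact f P Q k"
    then obtain p where p: "\<forall>s. f (P + s *s Q) = poly p s" "[:0, 1:] ^ k dvd p"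
      unfolding contact_def by blast
    have "poly p = poly [:c0, c1, c2, c3:]" using p(1) pp by auto
    then show "[:0, 1:] ^ k dvd [:c0, c1, c2, c3:]" using p(2) by (simp add: poly_eq_poly_eq_iff)
  next
    assume "[:0, 1:] ^ k dvd [:c0, c1, c2, c3:]"
    then show "contact f P Q k" unfolding contact_def using pp by blast
  qed
  also have "\<dots> \<longleftrightarrow> monom 1 k dvd [:c0, c1, c2, c3:]" by (simp add: monom_altdef)
  also have "\<dots> \<longleftrightarrow> (\<forall>i<k. coeff [:c0, c1, c2, c3:] i = 0)" by (rule monom_1_dvd_iff')
  finally show ?thesis .
qed

section \<open>The cuspidal cubic \<open>4z\<^sup>3 + 27xy\<^sup>2\<close>\<close>

definition cusp_cubic :: "complex^3 \<Rightarrow> complex" where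
  "cusp_cubic v = 4*(v$3)^3 + 27 * v$1 * (v$2)^2"

definition cusp_polar1 :: "complex^3 \<Rightarrow> complex^3 \<Rightarrow> complex" where
  "cusp_polar1 P Q = 12*(P$3)^2*Q$3 + 27*Q$1*(P$2)^2 + 54*P$1*P$2*Q$2"

definition cusp_polar2 :: "complex^3 \<Rightarrow> complex^3 \<Rightarrow> complex" where
  "cusp_polar2 P Q = 12*P$3*(Q$3)^2 + 54*Q$1*P$2*Q$2 + 27*P$1*(Q$2)^2"

lemma cusp_cubic_expand:
  "cusp_cubic (P + s *s Q) = cusp_cubic P + cusp_polar1 P Q * s + cusp_polar2 P Q * s^2 + cusp_cubic Q * s^3"
  unfolding cusp_cubic_def cusp_polar1_def cusp_polar2_def by simp algebra

lemma contact_cusp_cubic_2: "contact cusp_cubic P Q 2 \<longleftrightarrow> cusp_cubic P = 0 \<and> cusp_polar1 P Q = 0"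
  by (simp add: contact_iff_coeffs[OF cusp_cubic_expand] less_Suc_eq numeral_2_eq_2) blast

lemma contact_cusp_cubic_3:
  "contact cusp_cubic P Q 3 \<longleftrightarrow> cusp_cubic P = 0 \<and> cusp_polar1 P Q = 0 \<and> cusp_polar2 P Q = 0"
  by (simp add: contact_iff_coeffs[OF cusp_cubic_expand] less_Suc_eq numeral_3_eq_3 numeral_2_eq_2)
    blast

lemma singular_pt_cusp_cubic_iff:
  "singular_pt cusp_cubic P \<longleftrightarrow> P \<noteq> 0 \<and> cusp_cubic P = 0 \<and> (\<forall>Q. indep2 P Q \<longrightarrow> cusp_polar1 P Q = 0)"
  unfolding singular_pt_def contact_cusp_cubic_2 by auto

definition e1 :: "complex^3" where "e1 = vector [1, 0, 0]"
definition e2 :: "complex^3" where "e2 = vector [0, 1, 0]"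
definition e3 :: "complex^3" where "e3 = vector [0, 0, 1]"

lemma e_nonzero: "e1 \<noteq> 0" "e2 \<noteq> 0" "e3 \<noteq> 0"
  unfolding e1_def e2_def e3_def by (simp_all add: vec3_eq_iff)

lemma indep2_e: "indep2 e2 e3" "indep2 e2 e1" "indep2 e1 e3"
  unfolding indep2_def e1_def e2_def e3_def by (simp_all add: vec3_eq_iff)

lemma lineset_e1_eq:
  assumes "indep2 e1 Q" "Q$2 = 0"
  shows "lineset e1 Q = lineset e1 e3"
proof -
  have q3: "Q$3 \<noteq> 0"
  proof
    assume "Q$3 = 0"
    then have "(Q$1) *s e1 + (-1) *s Q = 0" using assms(2) unfolding e1_def by (simp add: vec3_eq_iff)
    then show False using assms(1) unfolding indep2_def by fastforce
  qed
  have 1: "a *s e1 + b *s Q = (a + b * Q$1) *s e1 + (b * Q$3) *s e3" for a b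
    using assms(2) unfolding e1_def e3_def by (simp add: vec3_eq_iff algebra_simps)
  have 2: "a *s e1 + b *s e3 = (a - b / Q$3 * Q$1) *s e1 + (b / Q$3) *s Q" for a b
    using assms(2) q3 unfolding e1_def e3_def by (simp add: vec3_eq_iff field_simps)
  show ?thesis unfolding lineset_def
  proof (intro set_eqI iffI)
    fix S assume "S \<in> {proj (a *s e1 + b *s Q) |a b. (a, b) \<noteq> (0, 0)}"
    then obtain a b where "S = proj (a *s e1 + b *s Q)" "(a, b) \<noteq> (0, 0)" by blast
    then show "S \<in> {proj (a *s e1 + b *s e3) |a b. (a, b) \<noteq> (0, 0)}"
      using q3 1 by (intro CollectI exI[of _ "a + b * Q$1"] exI[of _ "b * Q$3"]) auto
  next
    fix S assume "S \<in> {proj (a *s e1 + b *s e3) |a b. (a, b) \<noteq> (0, 0)}"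
    then obtain a b where "S = proj (a *s e1 + b *s e3)" "(a, b) \<noteq> (0, 0)" by blast
    then show "S \<in> {proj (a *s e1 + b *s Q) |a b. (a, b) \<noteq> (0, 0)}"
      using q3 2 by (intro CollectI exI[of _ "a - b / Q$3 * Q$1"] exI[of _ "b / Q$3"]) auto
  qed
qed

lemma cusp_pt_cusp_cubic: "cusp_pt cusp_cubic e1"
  unfolding cusp_pt_def
proof (intro conjI exI[of _ e3] allI impI)
  show "singular_pt cusp_cubic e1"
    unfolding singular_pt_cusp_cubic_iff using e_nonzero by (simp add: cusp_cubic_def cusp_polar1_def e1_def)
  show "indep2 e1 e3" by (rule indep2_e)
  show "contact cusp_cubic e1 e3 3"
    unfolding contact_cusp_cubic_3 by (simp add: cusp_cubic_def cusp_polar1_def cusp_polar2_def e1_def e3_def)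
  fix Q assume "indep2 e1 Q \<and> contact cusp_cubic e1 Q 3"
  then show "lineset e1 Q = lineset e1 e3"
    using lineset_e1_eq unfolding contact_cusp_cubic_3 by (simp add: cusp_polar2_def e1_def)
qed

lemma flex_pt_cusp_cubic: "flex_pt cusp_cubic e2"
  unfolding flex_pt_def smooth_pt_def singular_pt_cusp_cubic_iff
proof (intro conjI exI[of _ e3])
  show "e2 \<noteq> 0" "indep2 e2 e3" by (simp_all add: e_nonzero indep2_e)
  show "cusp_cubic e2 = 0" by (simp add: cusp_cubic_def e2_def)
  show "\<not> (e2 \<noteq> 0 \<and> cusp_cubic e2 = 0 \<and> (\<forall>Q. indep2 e2 Q \<longrightarrow> cusp_polar1 e2 Q = 0))"
    using indep2_e(2) by (auto simp: cusp_polar1_def e1_def e2_def)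
  show "contact cusp_cubic e2 e3 3"
    unfolding contact_cusp_cubic_3 by (simp add: cusp_cubic_def cusp_polar1_def cusp_polar2_def e2_def e3_def)
qed

lemma contact_cusp_cubic_flex_tangent: "contact cusp_cubic e2 e3 2"
  unfolding contact_cusp_cubic_2 by (simp add: cusp_cubic_def cusp_polar1_def e2_def e3_def)

lemma flex_pt_cusp_cubic_unique:
  assumes "flex_pt cusp_cubic P"
  shows "proj P = proj e2"
proof -
  from assms obtain Q where sm: "smooth_pt cusp_cubic P" and Q: "indep2 P Q" "contact cusp_cubic P Q 3"
    unfolding flex_pt_def by blast
  have P: "P \<noteq> 0" "cusp_cubic P = 0" and ns: "\<not> singular_pt cusp_cubic P"
    using sm unfolding smooth_pt_def by auto
  have c: "cusp_polar1 P Q = 0" "cusp_polar2 P Q = 0" using Q(2) unfolding contact_cusp_cubic_3 by auto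
  show ?thesis
  proof (cases "P$3 = 0")
    case True
    then have "P$1 = 0 \<or> P$2 = 0" using P(2) by (simp add: cusp_cubic_def)
    moreover have "P$2 \<noteq> 0"
      using ns P True unfolding singular_pt_cusp_cubic_iff by (auto simp: cusp_polar1_def)
    ultimately have "P = (P$2) *s e2" using True by (simp add: vec3_eq_iff e2_def)
    then show ?thesis using \<open>P$2 \<noteq> 0\<close> proj_smult by metis
  next
    case False
    then have p2: "P$2 \<noteq> 0" using P(2) by (auto simp: cusp_cubic_def)
    text \<open>Eliminating \<open>Q\<close> from the two polar conditions forces \<open>Q\<close> to be proportional to \<open>P\<close>.\<close>
    have "12 * P$3 * (P$2 * Q$3 - P$3 * Q$2)^2
        = (P$2)^2 * cusp_polar2 P Q - 2 * P$2 * Q$2 * cusp_polar1 P Q + 3 * (Q$2)^2 * cusp_cubic P"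
      unfolding cusp_polar1_def cusp_polar2_def cusp_cubic_def by algebra
    then have e3': "P$2 * Q$3 = P$3 * Q$2" using c P False by simp
    have "27 * (P$2)^2 * (P$2 * Q$1 - Q$2 * P$1)
        = P$2 * cusp_polar1 P Q - 3 * Q$2 * cusp_cubic P - 12 * (P$3)^2 * (P$2 * Q$3 - P$3 * Q$2)"
      unfolding cusp_polar1_def cusp_cubic_def by algebra
    then have "P$2 * Q$1 = Q$2 * P$1" using c P e3' p2 by simp
    then have "(Q$2) *s P + (- P$2) *s Q = 0" using e3' by (simp add: vec3_eq_iff algebra_simps)
    then show ?thesis using Q(1) p2 unfolding indep2_def by fastforce
  qed
qed

lemma cusp_cubic_nonvanishing_on_line:
  assumes "(n::complex^3) \<noteq> 0"
  shows "\<exists>v. dot3 n v = 0 \<and> cusp_cubic v \<noteq> 0"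
proof (cases "n$1 = 0")
  case False
  then show ?thesis
    by (intro exI[of _ "vector [- n$3 / n$1, 0, 1]"]) (simp add: dot3_def cusp_cubic_def field_simps)
next
  case n1: True
  show ?thesis
  proof (cases "n$2 = 0")
    case False
    then show ?thesis using n1
      by (intro exI[of _ "vector [0, - n$3 / n$2, 1]"]) (simp add: dot3_def cusp_cubic_def field_simps)
  next
    case True
    then show ?thesis using n1
      by (intro exI[of _ "vector [1, 1, 0]"]) (simp add: dot3_def cusp_cubic_def)
  qed
qed

locale coord_change =
  fixes N :: "complex^3 \<Rightarrow> complex^3"
  assumes linear: "\<And>a b x y. N (a *s x + b *s y) = a *s N x + b *s N y"
    and inj: "inj N"
begin

lemma zero [simp]: "N 0 = 0"
  using linear[of 0 0 0 0] by simp

lemma smult: "N (a *s x) = a *s N x"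
  using linear[of a x 0 0] by simp

lemma add_smult: "N (x + s *s y) = N x + s *s N y"
  using linear[of 1 x s y] by simp

lemma eq_0_iff: "N x = 0 \<longleftrightarrow> x = 0"
  using inj zero by (metis injD)

lemma surj: "surj N"
proof -
  have "linear N"
  proof (rule linearI)
    show "N (x + y) = N x + N y" for x y using linear[of 1 x 1 y] by simp
    have "c *\<^sub>R x = complex_of_real c *s x" for c and x :: "complex^3"
      by (simp add: vec_eq_iff) (simp add: scaleR_conv_of_real)
    then show "N (c *\<^sub>R x) = c *\<^sub>R N x" for c x by (simp add: smult)
  qed
  then show ?thesis using inj linear_injective_imp_surjective by blast
qed

lemma image_proj_N: "N ` proj x = proj (N x)"
  by (rule image_proj) (rule smult)

lemma proj_N_eq_iff: "proj (N x) = proj (N y) \<longleftrightarrow> proj x = proj y"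
  unfolding proj_eq_iff by (metis smult inj injD)

lemma indep2_N_iff: "indep2 (N P) (N Q) \<longleftrightarrow> indep2 P Q"
  unfolding indep2_def by (metis linear eq_0_iff)

lemma contact_comp: "contact (\<lambda>v. f (N v)) P Q k \<longleftrightarrow> contact f (N P) (N Q) k"
  unfolding contact_def by (simp add: add_smult)

lemma singular_pt_comp: "singular_pt (\<lambda>v. f (N v)) P \<longleftrightarrow> singular_pt f (N P)"
proof -
  have "(\<forall>Q. indep2 P Q \<longrightarrow> contact (\<lambda>v. f (N v)) P Q 2)
      \<longleftrightarrow> (\<forall>Q'. indep2 (N P) Q' \<longrightarrow> contact f (N P) Q' 2)"
    using surj by (metis contact_comp indep2_N_iff surjD)
  then show ?thesis unfolding singular_pt_def using eq_0_iff by auto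
qed

lemma smooth_pt_comp: "smooth_pt (\<lambda>v. f (N v)) P \<longleftrightarrow> smooth_pt f (N P)"
  unfolding smooth_pt_def singular_pt_comp using eq_0_iff by auto

lemma flex_pt_comp: "flex_pt (\<lambda>v. f (N v)) P \<longleftrightarrow> flex_pt f (N P)"
  unfolding flex_pt_def smooth_pt_comp
  using surj by (metis contact_comp indep2_N_iff surjD)

lemma lineset_N: "lineset (N P) (N Q) = (\<lambda>S. N ` S) ` lineset P Q"
proof -
  have "lineset (N P) (N Q) = {proj (N (a *s P + b *s Q)) |a b. (a, b) \<noteq> (0, 0)}"
    unfolding lineset_def by (simp add: linear)
  also have "\<dots> = (\<lambda>S. N ` S) ` lineset P Q"
    unfolding lineset_def image_proj_N[symmetric] by blast
  finally show ?thesis .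
qed

lemma lineset_N_eq_iff: "lineset (N P) (N Q') = lineset (N P) (N Q) \<longleftrightarrow> lineset P Q' = lineset P Q"
proof -
  have "inj (\<lambda>S. N ` S)" using inj by (simp add: inj_def inj_image_eq_iff)
  then show ?thesis unfolding lineset_N by (simp add: inj_image_eq_iff)
qed

lemma cusp_pt_comp:
  assumes "cusp_pt f (N P)"
  shows "cusp_pt (\<lambda>v. f (N v)) P"
proof -
  obtain Q' where s: "singular_pt f (N P)" and q: "indep2 (N P) Q'" "contact f (N P) Q' 3"
    and u: "\<And>R. indep2 (N P) R \<and> contact f (N P) R 3 \<Longrightarrow> lineset (N P) R = lineset (N P) Q'"
    using assms unfolding cusp_pt_def by blast
  obtain Q where Q: "Q' = N Q" using surj by (metis surjD)
  show ?thesis unfolding cusp_pt_def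
  proof (intro conjI exI[of _ Q] allI impI)
    show "singular_pt (\<lambda>v. f (N v)) P" using s singular_pt_comp by simp
    show "indep2 P Q" using q(1) unfolding Q indep2_N_iff .
    show "contact (\<lambda>v. f (N v)) P Q 3" using q(2) unfolding Q contact_comp .
    fix R assume "indep2 P R \<and> contact (\<lambda>v. f (N v)) P R 3"
    then have "lineset (N P) (N R) = lineset (N P) (N Q)"
      using u[of "N R"] unfolding Q indep2_N_iff contact_comp by simp
    then show "lineset P R = lineset P Q" using lineset_N_eq_iff by simp
  qed
qed

lemma no_linear_factor_comp:
  assumes noline: "\<And>n. n \<noteq> 0 \<Longrightarrow> \<exists>v. dot3 n v = 0 \<and> f v \<noteq> 0"
  shows "\<not> (\<exists>l g. is_form 1 l \<and> (\<forall>v. f (N v) = l v * g v))"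
proof
  assume "\<exists>l g. is_form 1 l \<and> (\<forall>v. f (N v) = l v * g v)"
  then obtain l g where l: "is_form 1 l" and fg: "\<And>v. f (N v) = l v * g v" by blast
  obtain c where c: "c \<noteq> 0" "\<And>v. l v = dot3 c v" using linear_form_eq_dot3[OF l] by blast
  obtain u1 u2 where u: "indep2 u1 u2" "dot3 c u1 = 0" "dot3 c u2 = 0"
    using orthogonal_indep2_pair[OF c(1)] by blast
  obtain a b where "f (a *s N u1 + b *s N u2) \<noteq> 0"
    using nonvanishing_on_line[OF iffD2[OF indep2_N_iff u(1)] noline] by blast
  moreover have "f (a *s N u1 + b *s N u2) = 0"
    unfolding linear[symmetric] fg c(2) dot3_linear u by simp
  ultimately show False by contradiction
qed

lemma contains_line_comp:
  assumes "contains_line {proj t | t. t \<noteq> 0 \<and> F (N t) = 0}"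
  shows "contains_line {proj v | v. v \<noteq> 0 \<and> F v = 0}"
proof -
  obtain P Q where PQ: "indep2 P Q" "lineset P Q \<subseteq> {proj t | t. t \<noteq> 0 \<and> F (N t) = 0}"
    using assms unfolding contains_line_def by blast
  have "N ` S \<in> {proj v | v. v \<noteq> 0 \<and> F v = 0}" if S: "S \<in> lineset P Q" for S
  proof -
    obtain t where "S = proj t" "t \<noteq> 0" "F (N t) = 0" using PQ(2) S by blast
    then show ?thesis using eq_0_iff image_proj_N by auto
  qed
  then have "lineset (N P) (N Q) \<subseteq> {proj v | v. v \<noteq> 0 \<and> F v = 0}"
    unfolding lineset_N by blast
  then show ?thesis using PQ(1) indep2_N_iff unfolding contains_line_def by blast
qed

end

definition dual_coords :: "complex^3 \<Rightarrow> complex^3 \<Rightarrow> complex^3 \<Rightarrow> complex^3 \<Rightarrow> complex^3" where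
  "dual_coords n1 n2 n3 t = vector [dot3 n1 t, dot3 n2 t, dot3 n3 t]"

lemma coord_change_dual_coords:
  assumes "\<And>t. dot3 n1 t = 0 \<Longrightarrow> dot3 n2 t = 0 \<Longrightarrow> dot3 n3 t = 0 \<Longrightarrow> t = 0"
  shows "coord_change (dual_coords n1 n2 n3)"
proof
  show lin: "dual_coords n1 n2 n3 (a *s x + b *s y) = a *s dual_coords n1 n2 n3 x + b *s dual_coords n1 n2 n3 y"
    for a b x y
    unfolding dual_coords_def by (simp add: vec3_eq_iff dot3_linear)
  show "inj (dual_coords n1 n2 n3)"
  proof (rule injI)
    fix x y assume "dual_coords n1 n2 n3 x = dual_coords n1 n2 n3 y"
    then have "dual_coords n1 n2 n3 (1 *s x + (-1) *s y) = 0" unfolding lin by simp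
    then have "dot3 n1 (x - y) = 0" "dot3 n2 (x - y) = 0" "dot3 n3 (x - y) = 0"
      by (simp_all add: dual_coords_def vec3_eq_iff)
    then show "x = y" using assms[of "x - y"] by simp
  qed
qed

lemma is_form_cusp_cubic_dual_coords:
  assumes "coord_change (dual_coords n1 n2 n3)"
  shows "is_form 3 (\<lambda>v. cusp_cubic (dual_coords n1 n2 n3 v))"
proof -
  interpret coord_change "dual_coords n1 n2 n3" by fact
  have "homogeneous (Suc (Suc (Suc 0)))
     (\<lambda>v. dot3 n3 v * (dot3 n3 v * (dot3 n3 v * 4)) + dot3 n1 v * (dot3 n2 v * (dot3 n2 v * 27)))"
    by (intro homogeneous_add homogeneous_mult_linear homogeneous_const)
  moreover have "cusp_cubic (dual_coords n1 n2 n3 v)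
      = dot3 n3 v * (dot3 n3 v * (dot3 n3 v * 4)) + dot3 n1 v * (dot3 n2 v * (dot3 n2 v * 27))" for v
    unfolding cusp_cubic_def dual_coords_def by (simp add: algebra_simps power2_eq_square power3_eq_cube)
  moreover obtain v where "dual_coords n1 n2 n3 v = e3" using surj by (metis surjD)
  then have "cusp_cubic (dual_coords n1 n2 n3 v) \<noteq> 0" by (simp add: cusp_cubic_def e3_def)
  ultimately show ?thesis unfolding is_form_iff_homogeneous by (auto simp: numeral_3_eq_3)
qed

lemma lineset_dual_coords:
  assumes N: "coord_change (dual_coords n1 n2 n3)"
    and Pf: "dual_coords n1 n2 n3 Pf = e2" and Qf: "dual_coords n1 n2 n3 Qf = e3"
  shows "lineset Pf Qf = {proj t | t. t \<noteq> 0 \<and> dot3 n1 t = 0}"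
proof -
  interpret coord_change "dual_coords n1 n2 n3" by fact
  let ?N = "dual_coords n1 n2 n3"
  show ?thesis
  proof (intro set_eqI iffI)
    fix S assume "S \<in> lineset Pf Qf"
    then obtain a b where ab: "S = proj (a *s Pf + b *s Qf)" "(a, b) \<noteq> (0, 0)"
      unfolding lineset_def by blast
    have "?N (a *s Pf + b *s Qf) = vector [0, a, b]"
      unfolding linear Pf Qf by (simp add: vec3_eq_iff e2_def e3_def)
    then have "dot3 n1 (a *s Pf + b *s Qf) = 0" "a *s Pf + b *s Qf \<noteq> 0"
      using ab(2) eq_0_iff[of "a *s Pf + b *s Qf"] by (auto simp: dual_coords_def vec3_eq_iff)
    then show "S \<in> {proj t | t. t \<noteq> 0 \<and> dot3 n1 t = 0}" using ab(1) by blast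
  next
    fix S assume "S \<in> {proj t | t. t \<noteq> 0 \<and> dot3 n1 t = 0}"
    then obtain t where t: "S = proj t" "t \<noteq> 0" "dot3 n1 t = 0" by blast
    define y z where "y = (?N t)$2" and "z = (?N t)$3"
    have "?N t = ?N (y *s Pf + z *s Qf)"
      unfolding linear Pf Qf y_def z_def using t(3) by (simp add: vec3_eq_iff e2_def e3_def dual_coords_def)
    then have "t = y *s Pf + z *s Qf" using inj by (simp add: inj_eq)
    moreover from this have "(y, z) \<noteq> (0, 0)" using t(2) by auto
    ultimately show "S \<in> lineset Pf Qf" unfolding lineset_def using t(1) by blast
  qed
qed

text \<open>In the coordinates \<open>dual_coords n1 n2 n3\<close> the curve becomes \<open>x (4z\<^sup>3 + 27xy\<^sup>2) = 0\<close>: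
  the line \<open>x = 0\<close> is the tangent at the flex \<open>[0:1:0]\<close>.\<close>

lemma cuspidal_cubic_and_flex_tangent_dual_coords:
  assumes N: "coord_change (dual_coords n1 n2 n3)"
  shows "cuspidal_cubic_and_flex_tangent
     (zeroset (\<lambda>v. cusp_cubic (dual_coords n1 n2 n3 v)) \<union> {proj t | t. t \<noteq> 0 \<and> dot3 n1 t = 0})"
proof -
  interpret coord_change "dual_coords n1 n2 n3" by fact
  let ?N = "dual_coords n1 n2 n3"
  let ?f = "\<lambda>v. cusp_cubic (?N v)"
  obtain Pc Pf Qf where Pc: "?N Pc = e1" and Pf: "?N Pf = e2" and Qf: "?N Qf = e3"
    using surj by (metis surjD)
  have "cusp_pt ?f Pc" using cusp_pt_comp cusp_pt_cusp_cubic Pc by simp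
  then have "cuspidal_cubic ?f"
    unfolding cuspidal_cubic_def irreducible_cubic_def
    using is_form_cusp_cubic_dual_coords[OF N] no_linear_factor_comp[OF cusp_cubic_nonvanishing_on_line]
    by blast
  moreover have "flex_pt ?f Pf" using flex_pt_comp flex_pt_cusp_cubic Pf by simp
  moreover have "proj P' = proj Pf" if "flex_pt ?f P'" for P'
    using that flex_pt_comp flex_pt_cusp_cubic_unique Pf proj_N_eq_iff by metis
  moreover have "indep2 Pf Qf" using indep2_N_iff[of Pf Qf] indep2_e(1) unfolding Pf Qf by simp
  moreover have "contact ?f Pf Qf 2" using contact_comp contact_cusp_cubic_flex_tangent Pf Qf by simp
  ultimately have "cuspidal_cubic_and_flex_tangent (zeroset ?f \<union> lineset Pf Qf)"
    unfolding cuspidal_cubic_and_flex_tangent_def by blast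
  moreover have "lineset Pf Qf = {proj t | t. t \<noteq> 0 \<and> dot3 n1 t = 0}"
    by (rule lineset_dual_coords[OF N Pf Qf])
  ultimately show ?thesis by simp
qed

section \<open>The member \<open>E + F\<^sub>1 + F\<^sub>2\<close> of the net\<close>

definition coeff_col :: "(3 \<Rightarrow> complex^5) \<Rightarrow> 5 \<Rightarrow> complex^3" where
  "coeff_col qs k = (\<chi> i. qs i $ k)"

text \<open>The members of the net without \<open>xz\<close> and \<open>yz\<close> terms are pairs of lines through \<open>p\<close>, i.e.
  of the form \<open>E + F\<^sub>1 + F\<^sub>2\<close>; their coefficient vectors are orthogonal to the last two columns.\<close>

definition EFF_member :: "(3 \<Rightarrow> complex^5) \<Rightarrow> complex^5" where
  "EFF_member qs = (\<Sum>i\<in>UNIV. cross3 (coeff_col qs 4) (coeff_col qs 5) $ i *s qs i)"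

definition EFF_quad :: "(3 \<Rightarrow> complex^5) \<Rightarrow> complex^2 \<Rightarrow> complex" where
  "EFF_quad qs w = EFF_member qs $ 1 * (w$1)^2 + EFF_member qs $ 2 * w$1 * w$2 + EFF_member qs $ 3 * (w$2)^2"

lemma lin_part_eq_cols: "lin_part qs w = w$1 *s coeff_col qs 4 + w$2 *s coeff_col qs 5"
  unfolding lin_part_def linE_def coeff_col_def by (simp add: vec3_eq_iff)

lemma quad_part_eq_cols:
  "quad_part qs w = (w$1)^2 *s coeff_col qs 1 + (w$1 * w$2) *s coeff_col qs 2 + (w$2)^2 *s coeff_col qs 3"
  unfolding quad_part_def coeff_col_def by (simp add: vec3_eq_iff algebra_simps)

lemma Lspan_nth: "(\<Sum>i\<in>UNIV. c$i *s qs i) $ k = dot3 c (coeff_col qs k)"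
  unfolding dot3_def coeff_col_def by (simp add: sum_3)

lemma indep2_coeff_cols:
  assumes bpf: "base_point_free qs"
  shows "indep2 (coeff_col qs 4) (coeff_col qs 5)"
  unfolding indep2_def
proof (intro allI impI)
  fix a b assume ab: "a *s coeff_col qs 4 + b *s coeff_col qs 5 = 0"
  have "lin_part qs (vector [a, b]) = 0" unfolding lin_part_eq_cols using ab by simp
  then have "0 *s quad_part qs (vector [a, b]) + 1 *s lin_part qs (vector [a, b]) = 0" by simp
  then have "vector [a, b] = (0::complex^2)"
    using quad_lin_part_indep2[OF bpf] unfolding indep2_def by fastforce
  then show "a = 0 \<and> b = 0" by (simp add: vec2_eq_iff)
qed

lemma EFF_member_nth_45: "EFF_member qs $ 4 = 0" "EFF_member qs $ 5 = 0"
  unfolding EFF_member_def Lspan_nth cross3_def dot3_def by (simp; algebra)+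

lemma EFF_member_in_Lspan: "EFF_member qs \<in> Lspan qs"
  unfolding Lspan_def EFF_member_def by blast

lemma EFF_member_nonzero:
  assumes "lin_indep3 qs" "base_point_free qs"
  shows "EFF_member qs \<noteq> 0"
  using assms cross3_nonzero[OF indep2_coeff_cols] unfolding lin_indep3_def EFF_member_def by blast

lemma Lspan_multiple_of_EFF_member:
  assumes bpf: "base_point_free qs" and q: "q \<in> Lspan qs" "q$4 = 0" "q$5 = 0"
  obtains k where "q = k *s EFF_member qs"
proof -
  obtain c :: "complex^3" where c: "q = (\<Sum>i\<in>UNIV. c$i *s qs i)" using q(1) unfolding Lspan_def by blast
  have "dot3 c (coeff_col qs 4) = 0" "dot3 c (coeff_col qs 5) = 0"
    using q(2,3) unfolding c Lspan_nth by simp_all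
  then obtain k where "c = k *s cross3 (coeff_col qs 4) (coeff_col qs 5)"
    using orthogonal_imp_parallel_cross3[OF indep2_coeff_cols[OF bpf]] by blast
  then have "q = k *s EFF_member qs" unfolding c EFF_member_def by (simp add: vec5_eq_iff sum_3 algebra_simps)
  then show ?thesis by (rule that)
qed

lemma fibquad_nth_45: "fibquad l m $ 4 = 0" "fibquad l m $ 5 = 0"
  unfolding fibquad_def by simp_all

lemma fibquad_nonzero:
  assumes "(l::complex^2) \<noteq> 0" "m \<noteq> 0"
  shows "fibquad l m \<noteq> 0"
proof
  assume "fibquad l m = 0"
  then have "l$1 * m$1 = 0" "l$1 * m$2 + l$2 * m$1 = 0" "l$2 * m$2 = 0"
    unfolding fibquad_def by (simp_all add: vec5_eq_iff)
  moreover have "l$1 \<noteq> 0 \<or> l$2 \<noteq> 0" "m$1 \<noteq> 0 \<or> m$2 \<noteq> 0"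
    using assms by (simp_all add: vec2_neq_0_iff)
  ultimately show False by auto
qed

lemma fibquad_smult: "fibquad (a *s l) (b *s m) = (a * b) *s fibquad l m"
  unfolding fibquad_def by (simp add: vec5_eq_iff algebra_simps)

lemma EFF_member_eq_fibquad:
  assumes "lin_indep3 qs" "base_point_free qs"
  obtains l m where "l \<noteq> 0" "m \<noteq> 0" "EFF_member qs = fibquad l m"
proof -
  obtain a1 b1 a2 b2 where f: "EFF_member qs $ 1 = a1*a2" "EFF_member qs $ 2 = a1*b2 + b1*a2"
      "EFF_member qs $ 3 = b1*b2"
    by (rule binary_quadratic_splits)
  define l m :: "complex^2" where "l = vector [a1, b1]" and "m = vector [a2, b2]"
  have e: "EFF_member qs = fibquad l m"
    unfolding fibquad_def l_def m_def using f EFF_member_nth_45 by (simp add: vec5_eq_iff)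
  moreover have "l \<noteq> 0" "m \<noteq> 0"
    using EFF_member_nonzero[OF assms] e by (auto simp: fibquad_def vec5_eq_iff)
  ultimately show ?thesis using that by blast
qed

lemma members_EFF_eq:
  assumes "lin_indep3 qs" "base_point_free qs"
  shows "members_EFF qs = {proj (EFF_member qs)}"
proof
  show "members_EFF qs \<subseteq> {proj (EFF_member qs)}"
  proof
    fix S assume "S \<in> members_EFF qs"
    then obtain q l m where q: "S = proj q" "q \<in> Lspan qs" "l \<noteq> 0" "m \<noteq> 0" "q = fibquad l m"
      unfolding members_EFF_def by blast
    have "q$4 = 0" "q$5 = 0" using q(5) fibquad_nth_45 by simp_all
    then obtain k where k: "q = k *s EFF_member qs"
      by (rule Lspan_multiple_of_EFF_member[OF assms(2) q(2)])
    have "k \<noteq> 0" using k q(5) fibquad_nonzero[OF q(3,4)] by auto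
    then show "S \<in> {proj (EFF_member qs)}" using q(1) k proj_smult by simp
  qed
  obtain l m where "l \<noteq> 0" "m \<noteq> 0" "EFF_member qs = fibquad l m"
    by (rule EFF_member_eq_fibquad[OF assms])
  then show "{proj (EFF_member qs)} \<subseteq> members_EFF qs"
    using EFF_member_in_Lspan unfolding members_EFF_def by blast
qed

lemma members_E2F_subset_members_EFF: "members_E2F qs \<subseteq> members_EFF qs"
  unfolding members_E2F_def members_EFF_def by blast

lemma members_E2F_nonempty_iff:
  assumes "lin_indep3 qs" "base_point_free qs"
  shows "members_E2F qs \<noteq> {} \<longleftrightarrow> (\<exists>l. l \<noteq> 0 \<and> EFF_member qs = fibquad l l)"
proof
  assume "members_E2F qs \<noteq> {}"
  then obtain q l where q: "q \<in> Lspan qs" "l \<noteq> 0" "q = fibquad l l" unfolding members_E2F_def by blast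
  have "q$4 = 0" "q$5 = 0" using q(3) fibquad_nth_45 by simp_all
  then obtain k where k: "q = k *s EFF_member qs"
    by (rule Lspan_multiple_of_EFF_member[OF assms(2) q(1)])
  have kz: "k \<noteq> 0" using k fibquad_nonzero[OF q(2) q(2)] q(3) by auto
  define s where "s = csqrt (1/k)"
  have s2: "s * s = 1/k" unfolding s_def by (metis power2_csqrt power2_eq_square)
  have "EFF_member qs = (1/k) *s q" using k kz by (simp add: vector_smult_assoc)
  also have "\<dots> = fibquad (s *s l) (s *s l)" unfolding fibquad_smult s2 q(3) ..
  finally have "EFF_member qs = fibquad (s *s l) (s *s l)" .
  moreover have "s *s l \<noteq> 0" using s2 kz q(2) by auto
  ultimately show "\<exists>l. l \<noteq> 0 \<and> EFF_member qs = fibquad l l" by blast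
next
  assume "\<exists>l. l \<noteq> 0 \<and> EFF_member qs = fibquad l l"
  then show "members_E2F qs \<noteq> {}" unfolding members_E2F_def using EFF_member_in_Lspan by blast
qed

lemma EFF_member_split:
  assumes "lin_indep3 qs" "base_point_free qs"
    and nsq: "\<not> (\<exists>l. l \<noteq> 0 \<and> EFF_member qs = fibquad l l)"
  obtains l m where "l$1 * m$2 - l$2 * m$1 \<noteq> 0" "EFF_member qs = fibquad l m"
proof -
  obtain l m where lm: "l \<noteq> 0" "m \<noteq> 0" "EFF_member qs = fibquad l m"
    by (rule EFF_member_eq_fibquad[OF assms(1,2)])
  have "l$1 * m$2 - l$2 * m$1 \<noteq> 0"
  proof
    assume "l$1 * m$2 - l$2 * m$1 = 0"
    then obtain c where c: "c \<noteq> 0" "m = c *s l"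
      using proj2_eq_iff_det[OF lm(1,2)] by (auto simp: proj_eq_iff)
    define s where "s = csqrt c"
    have s2: "s * s = c" unfolding s_def by (metis power2_csqrt power2_eq_square)
    have "EFF_member qs = fibquad (s *s l) (s *s l)"
      unfolding lm(3) c(2) fibquad_smult s2 by (simp add: fibquad_def vec5_eq_iff)
    moreover have "s *s l \<noteq> 0" using s2 c(1) lm(1) by auto
    ultimately show False using nsq by blast
  qed
  then show ?thesis using lm(3) that by blast
qed

lemma EFF_quad_fibquad:
  "EFF_member qs = fibquad l m \<Longrightarrow> EFF_quad qs w = (l$1 * w$1 + l$2 * w$2) * (m$1 * w$1 + m$2 * w$2)"
  unfolding EFF_quad_def fibquad_def by (simp add: algebra_simps power2_eq_square)

section \<open>The branch curve\<close>

lemma fibre_cubic_linear: "fibre_cubic qs (a *s x + b *s y) w = a * fibre_cubic qs x w + b * fibre_cubic qs y w"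
  unfolding fibre_cubic_def by (rule det3_linear3)

lemma det3_quad_part_cols: "det3 (quad_part qs w) (coeff_col qs 4) (coeff_col qs 5) = EFF_quad qs w"
  unfolding EFF_quad_def EFF_member_def Lspan_nth quad_part_eq_cols det3_def dot3_def cross3_def
  by (simp add: algebra_simps power2_eq_square)

lemma fibre_cubic_span_cols:
  "fibre_cubic qs (b *s coeff_col qs 4 + c *s coeff_col qs 5) w = (c * w$1 - b * w$2) * EFF_quad qs w"
  unfolding fibre_cubic_def lin_part_eq_cols det3_bilinear23 det3_quad_part_cols by simp

lemma fibre_cubic_eq_bin_cubic:
  obtains p q r s where "\<And>w. fibre_cubic qs t w = bin_cubic p q r s w"
proof
  let ?c = "coeff_col qs"
  show "fibre_cubic qs t w = bin_cubic (det3 (?c 1) (?c 4) t) (det3 (?c 1) (?c 5) t + det3 (?c 2) (?c 4) t)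
      (det3 (?c 2) (?c 5) t + det3 (?c 3) (?c 4) t) (det3 (?c 3) (?c 5) t) w" for w
    unfolding fibre_cubic_def quad_part_eq_cols lin_part_eq_cols det3_def bin_cubic_def by simp algebra
qed

lemma fibre_cubic_nonzero_witness:
  assumes bpf: "base_point_free qs" and w: "w \<noteq> 0"
  obtains t where "fibre_cubic qs t w \<noteq> 0"
proof -
  obtain t where "dot3 (cross3 (quad_part qs w) (lin_part qs w)) t \<noteq> 0"
    by (rule dot3_nonzero_witness[OF cross3_nonzero[OF quad_lin_part_indep2[OF bpf w]]])
  then show ?thesis using that by (simp add: fibre_cubic_def det3_eq_dot3_cross3)
qed

text \<open>Write \<open>t = \<tau> T + \<beta> U + \<gamma> V\<close>, where \<open>U, V\<close> (the columns 4 and 5) span the line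
  \<open>\<pi>(E)\<close>.\<close>

lemma fibre_cubic_decomposition:
  assumes bpf: "base_point_free qs"
  obtains nt T nb ng where
    "\<And>t. t = dot3 nt t *s T + dot3 nb t *s coeff_col qs 4 + dot3 ng t *s coeff_col qs 5"
    "\<And>t w. fibre_cubic qs t w
        = dot3 nt t * fibre_cubic qs T w + (dot3 ng t * w$1 - dot3 nb t * w$2) * EFF_quad qs w"
proof -
  let ?U = "coeff_col qs 4" and ?V = "coeff_col qs 5"
  obtain T where "dot3 (cross3 ?U ?V) T \<noteq> 0"
    by (rule dot3_nonzero_witness[OF cross3_nonzero[OF indep2_coeff_cols[OF bpf]]])
  then have T: "det3 ?U ?V T \<noteq> 0" by (simp add: det3_eq_dot3_cross3)
  define nt nb ng where "nt = (1 / det3 ?U ?V T) *s cross3 ?U ?V"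
    and "nb = (1 / det3 ?U ?V T) *s cross3 ?V T" and "ng = (1 / det3 ?U ?V T) *s cross3 T ?U"
  have dec: "t = dot3 nt t *s T + dot3 nb t *s ?U + dot3 ng t *s ?V" for t
    unfolding nt_def nb_def ng_def by (rule dual_basis_expansion[OF T])
  have "fibre_cubic qs t w
      = dot3 nt t * fibre_cubic qs T w + (dot3 ng t * w$1 - dot3 nb t * w$2) * EFF_quad qs w" for t w
  proof -
    have "fibre_cubic qs t w = fibre_cubic qs (dot3 nt t *s T + 1 *s (dot3 nb t *s ?U + dot3 ng t *s ?V)) w"
      using arg_cong[where f = "\<lambda>x. fibre_cubic qs x w", OF dec[of t]] by (simp add: add.assoc)
    then show ?thesis unfolding fibre_cubic_linear[of qs "dot3 nt t" T 1] fibre_cubic_span_cols by simp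
  qed
  with dec show ?thesis by (rule that)
qed

lemma fibre_cubic_normal_form:
  assumes bpf: "base_point_free qs" and det: "m11 * m22 - m12 * m21 \<noteq> 0"
  obtains nt na nb gp gq gr gs where
    "\<And>t. dot3 nt t = 0 \<Longrightarrow> dot3 na t = 0 \<Longrightarrow> dot3 nb t = 0 \<Longrightarrow> t = 0"
    "\<And>t z. fibre_cubic qs t (lin2 m11 m12 m21 m22 z) = dot3 nt t * bin_cubic gp gq gr gs z
        + (dot3 na t * z$1 + dot3 nb t * z$2) * EFF_quad qs (lin2 m11 m12 m21 m22 z)"
    "\<And>z. z \<noteq> 0 \<Longrightarrow> EFF_quad qs (lin2 m11 m12 m21 m22 z) = 0 \<Longrightarrow> bin_cubic gp gq gr gs z \<noteq> 0"
proof -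
  let ?M = "lin2 m11 m12 m21 m22"
  obtain nt T nb ng where dec: "\<And>t. t = dot3 nt t *s T + dot3 nb t *s coeff_col qs 4 + dot3 ng t *s coeff_col qs 5"
    and fc: "\<And>t w. fibre_cubic qs t w
        = dot3 nt t * fibre_cubic qs T w + (dot3 ng t * w$1 - dot3 nb t * w$2) * EFF_quad qs w"
    using fibre_cubic_decomposition[OF bpf] by blast
  obtain p q r s where T: "\<And>w. fibre_cubic qs T w = bin_cubic p q r s w"
    using fibre_cubic_eq_bin_cubic[of qs T] by blast
  obtain gp gq gr gs where "\<And>z. bin_cubic p q r s (?M z) = bin_cubic gp gq gr gs z"
    using bin_cubic_comp_lin2[of p q r s m11 m12 m21 m22] by blast
  then have g: "\<And>z. fibre_cubic qs T (?M z) = bin_cubic gp gq gr gs z" unfolding T .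
  define na nb' where "na = m11 *s ng + (- m21) *s nb" and "nb' = m12 *s ng + (- m22) *s nb"
  have basis: "t = 0" if "dot3 nt t = 0" "dot3 na t = 0" "dot3 nb' t = 0" for t
  proof -
    have "m11 * dot3 ng t - m21 * dot3 nb t = 0" "m12 * dot3 ng t - m22 * dot3 nb t = 0"
      using that(2,3) unfolding na_def nb'_def by (simp_all add: dot3_add_left dot3_diff_left dot3_smult_left)
    then have "(m11 * m22 - m12 * m21) * dot3 ng t = 0" "(m11 * m22 - m12 * m21) * dot3 nb t = 0"
      by algebra+
    then have "dot3 ng t = 0" "dot3 nb t = 0" using det by simp_all
    have "t = dot3 nt t *s T + dot3 nb t *s coeff_col qs 4 + dot3 ng t *s coeff_col qs 5" by (rule dec)
    also have "\<dots> = 0" using that(1) \<open>dot3 ng t = 0\<close> \<open>dot3 nb t = 0\<close> by simp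
    finally show "t = 0" .
  qed
  have form: "fibre_cubic qs t (?M z) = dot3 nt t * bin_cubic gp gq gr gs z
      + (dot3 na t * z$1 + dot3 nb' t * z$2) * EFF_quad qs (?M z)" for t z
  proof -
    have "dot3 ng t * ?M z $ 1 - dot3 nb t * ?M z $ 2 = dot3 na t * z$1 + dot3 nb' t * z$2"
      unfolding na_def nb'_def lin2_def by (simp add: dot3_add_left dot3_diff_left dot3_smult_left algebra_simps)
    with fc[of t "?M z"] show ?thesis unfolding g by simp
  qed
  have "bin_cubic gp gq gr gs z \<noteq> 0" if "z \<noteq> 0" "EFF_quad qs (?M z) = 0" for z
  proof -
    have "?M z \<noteq> 0" using that(1) lin2_eq_0_iff[OF det] by simp
    then obtain t where "fibre_cubic qs t (?M z) \<noteq> 0" by (rule fibre_cubic_nonzero_witness[OF bpf])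
    then show ?thesis unfolding form using that(2) by simp
  qed
  with basis form show ?thesis by (rule that)
qed

lemma branch_eq_cubic_disc_zero:
  assumes bpf: "base_point_free qs" and det: "m11 * m22 - m12 * m21 \<noteq> 0"
    and fc: "\<And>t z. fibre_cubic qs t (lin2 m11 m12 m21 m22 z) = bin_cubic (cp t) (cq t) (cr t) (cs t) z"
    and nz: "\<And>t. t \<noteq> 0 \<Longrightarrow> \<not> (cp t = 0 \<and> cq t = 0 \<and> cr t = 0 \<and> cs t = 0)"
  shows "branch qs = {proj t | t. t \<noteq> 0 \<and> cubic_disc (cp t) (cq t) (cr t) (cs t) = 0}"
proof -
  have "card (fibre_cubic_roots qs t) = card (bin_cubic_roots (cp t) (cq t) (cr t) (cs t))" for t
    unfolding fibre_cubic_roots_def bin_cubic_roots_def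
      card_proj_zeros_comp[OF bij_lin2[OF det] lin2_smult, of "fibre_cubic qs t"] fc ..
  then have "card (fibre_cubic_roots qs t) < 3 \<longleftrightarrow> cubic_disc (cp t) (cq t) (cr t) (cs t) = 0"
    if "t \<noteq> 0" for t
    using card_bin_cubic_roots_less_3_iff[OF nz[OF that]] by simp
  then show ?thesis unfolding branch_eq_fibre_cubic_roots[OF bpf] by (intro Collect_cong) auto
qed

text \<open>If \<open>EFF_quad\<close> is a square, the fibre cubic is \<open>\<tau> g(z) + (\<alpha> z\<^sub>1 + \<beta> z\<^sub>2) z\<^sub>1\<^sup>2\<close>, so its
  \<open>z\<^sub>1 z\<^sub>2\<^sup>2\<close> and \<open>z\<^sub>2\<^sup>3\<close> coefficients are proportional; \<open>cubic_disc_shift\<close> then splits off the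
  line \<open>\<tau> = 0\<close>, and the other factor is the cuspidal cubic in the coordinates \<open>n1, n2, n3\<close>.\<close>

lemma branch_if_EFF_quad_square:
  assumes bpf: "base_point_free qs" and det: "m11 * m22 - m12 * m21 \<noteq> 0"
    and sq: "\<And>z. EFF_quad qs (lin2 m11 m12 m21 m22 z) = (z$1)^2"
  shows "cuspidal_cubic_and_flex_tangent (branch qs)"
proof -
  obtain nt na nb gp gq gr gs where basis: "\<And>t. dot3 nt t = 0 \<Longrightarrow> dot3 na t = 0 \<Longrightarrow> dot3 nb t = 0 \<Longrightarrow> t = 0"
    and fc: "\<And>t z. fibre_cubic qs t (lin2 m11 m12 m21 m22 z) = dot3 nt t * bin_cubic gp gq gr gs z
        + (dot3 na t * z$1 + dot3 nb t * z$2) * EFF_quad qs (lin2 m11 m12 m21 m22 z)"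
    and g: "\<And>z. z \<noteq> 0 \<Longrightarrow> EFF_quad qs (lin2 m11 m12 m21 m22 z) = 0 \<Longrightarrow> bin_cubic gp gq gr gs z \<noteq> 0"
    using fibre_cubic_normal_form[OF bpf det] by blast
  have gs: "gs \<noteq> 0"
    using g[of "vector [0, 1]"] sq[of "vector [0, 1]"] by (simp add: bin_cubic_def vec2_eq_iff)
  define k where "k = gr / (3 * gs)"
  have gr: "gr = 3 * gs * k" unfolding k_def using gs by simp
  define cp cq cs where "cp t = dot3 nt t * gp + dot3 na t" and "cq t = dot3 nt t * gq + dot3 nb t"
    and "cs t = dot3 nt t * gs" for t
  have fc': "fibre_cubic qs t (lin2 m11 m12 m21 m22 z) = bin_cubic (cp t) (cq t) (3 * cs t * k) (cs t) z"
    for t z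
    unfolding fc sq cp_def cq_def cs_def bin_cubic_def gr
    by (simp add: algebra_simps power2_eq_square power3_eq_cube)
  define n1 n2 n3 where "n1 = gs *s nt" and "n2 = (gp - k * gq + 2 * gs * k^3) *s nt + na - k *s nb"
    and "n3 = (gq - 3 * gs * k^2) *s nt + nb"
  have n: "dot3 n1 t = cs t" "dot3 n2 t = cp t - k * cq t + 2 * cs t * k^3"
    "dot3 n3 t = cq t - 3 * cs t * k^2" for t
    unfolding n1_def n2_def n3_def cp_def cq_def cs_def
    by (simp_all add: dot3_add_left dot3_diff_left dot3_smult_left algebra_simps)
  have N: "coord_change (dual_coords n1 n2 n3)"
  proof (rule coord_change_dual_coords)
    fix t assume "dot3 n1 t = 0" "dot3 n2 t = 0" "dot3 n3 t = 0"
    then show "t = 0" using basis gs unfolding n cp_def cq_def cs_def by simp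
  qed
  have "branch qs = {proj t | t. t \<noteq> 0 \<and> cubic_disc (cp t) (cq t) (3 * cs t * k) (cs t) = 0}"
  proof (rule branch_eq_cubic_disc_zero[OF bpf det fc'])
    show "\<not> (cp t = 0 \<and> cq t = 0 \<and> 3 * cs t * k = 0 \<and> cs t = 0)" if "t \<noteq> 0" for t
      using that basis gs unfolding cp_def cq_def cs_def by auto
  qed
  moreover have "cubic_disc (cp t) (cq t) (3 * cs t * k) (cs t)
      = - dot3 n1 t * cusp_cubic (dual_coords n1 n2 n3 t)" for t
    unfolding cubic_disc_shift cusp_cubic_def dual_coords_def vector_3 n by simp
  ultimately have "branch qs = zeroset (\<lambda>v. cusp_cubic (dual_coords n1 n2 n3 v))
      \<union> {proj t | t. t \<noteq> 0 \<and> dot3 n1 t = 0}"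
    unfolding zeroset_def by auto
  then show ?thesis using cuspidal_cubic_and_flex_tangent_dual_coords[OF N] by simp
qed

definition split_quartic :: "complex \<Rightarrow> complex \<Rightarrow> complex^3 \<Rightarrow> complex" where
  "split_quartic gp gs v = cubic_disc (gp * v$1) (v$2) (v$3) (gs * v$1)"

lemma split_quartic_smult: "split_quartic gp gs (c *s v) = c^4 * split_quartic gp gs v"
  unfolding split_quartic_def cubic_disc_def by simp algebra

lemma cubic_poly_nonzero_witness:
  fixes a3 a2 a1 a0 :: complex
  assumes "a3 \<noteq> 0"
  obtains z where "a3 * z^3 + a2 * z^2 + a1 * z + a0 \<noteq> 0"
proof -
  have "[:a0, a1, a2, a3:] \<noteq> 0" using assms by simp
  then obtain z where "poly [:a0, a1, a2, a3:] z \<noteq> 0" using poly_all_0_iff_0 by blast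
  then show ?thesis using that by (simp add: algebra_simps power2_eq_square power3_eq_cube)
qed

lemma split_quartic_nonvanishing_on_line:
  assumes gp: "gp \<noteq> 0" and gs: "gs \<noteq> 0" and n: "(n::complex^3) \<noteq> 0"
  shows "\<exists>v. dot3 n v = 0 \<and> split_quartic gp gs v \<noteq> 0"
proof (cases "n$2 = 0")
  case n2: True
  show ?thesis
  proof (cases "n$3 = 0")
    case True
    then show ?thesis using n2
      by (intro exI[of _ "vector [0, 1, 1]"]) (simp add: dot3_def split_quartic_def cubic_disc_def)
  next
    case False
    define nu where "nu = - n$1 / n$3"
    have "-4*gs \<noteq> 0" using gs by simp
    then obtain y where y: "(-4*gs) * y^3 + nu^2 * y^2 + (18*gp*gs*nu) * y + (- 4*gp*nu^3 - 27*gp^2*gs^2) \<noteq> 0"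
      by (rule cubic_poly_nonzero_witness)
    have "split_quartic gp gs (vector [1, y, nu])
        = (-4*gs) * y^3 + nu^2 * y^2 + (18*gp*gs*nu) * y + (- 4*gp*nu^3 - 27*gp^2*gs^2)"
      unfolding split_quartic_def cubic_disc_def by (simp; algebra)
    moreover have "dot3 n (vector [1, y, nu]) = 0" using n2 False unfolding dot3_def nu_def by simp
    ultimately show ?thesis using y by metis
  qed
next
  case n2: False
  show ?thesis
  proof (cases "n$3 = 0")
    case True
    define mu where "mu = - n$1 / n$2"
    have "-4*gp \<noteq> 0" using gp by simp
    then obtain z where z: "(-4*gp) * z^3 + mu^2 * z^2 + (18*gp*gs*mu) * z + (- 4*gs*mu^3 - 27*gp^2*gs^2) \<noteq> 0"
      by (rule cubic_poly_nonzero_witness)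
    have "split_quartic gp gs (vector [1, mu, z])
        = (-4*gp) * z^3 + mu^2 * z^2 + (18*gp*gs*mu) * z + (- 4*gs*mu^3 - 27*gp^2*gs^2)"
      unfolding split_quartic_def cubic_disc_def by (simp; algebra)
    moreover have "dot3 n (vector [1, mu, z]) = 0" using n2 True unfolding dot3_def mu_def by simp
    ultimately show ?thesis using z by metis
  next
    case False
    have "split_quartic gp gs (vector [0, n$3, - n$2]) = (n$3)^2 * (n$2)^2"
      unfolding split_quartic_def cubic_disc_def by simp
    moreover have "dot3 n (vector [0, n$3, - n$2]) = 0" unfolding dot3_def by (simp add: algebra_simps)
    ultimately show ?thesis using n2 False by (intro exI[of _ "vector [0, n$3, - n$2]"]) simp
  qed
qed

lemma no_line_in_branch_if_EFF_quad_split: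
  assumes bpf: "base_point_free qs" and det: "m11 * m22 - m12 * m21 \<noteq> 0"
    and sp: "\<And>z. EFF_quad qs (lin2 m11 m12 m21 m22 z) = z$1 * z$2"
  shows "\<not> contains_line (branch qs)"
proof -
  obtain nt na nb gp gq gr gs where basis: "\<And>t. dot3 nt t = 0 \<Longrightarrow> dot3 na t = 0 \<Longrightarrow> dot3 nb t = 0 \<Longrightarrow> t = 0"
    and fc: "\<And>t z. fibre_cubic qs t (lin2 m11 m12 m21 m22 z) = dot3 nt t * bin_cubic gp gq gr gs z
        + (dot3 na t * z$1 + dot3 nb t * z$2) * EFF_quad qs (lin2 m11 m12 m21 m22 z)"
    and g: "\<And>z. z \<noteq> 0 \<Longrightarrow> EFF_quad qs (lin2 m11 m12 m21 m22 z) = 0 \<Longrightarrow> bin_cubic gp gq gr gs z \<noteq> 0"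
    using fibre_cubic_normal_form[OF bpf det] by blast
  have gp: "gp \<noteq> 0"
    using g[of "vector [1, 0]"] sp[of "vector [1, 0]"] by (simp add: bin_cubic_def vec2_eq_iff)
  have gs: "gs \<noteq> 0"
    using g[of "vector [0, 1]"] sp[of "vector [0, 1]"] by (simp add: bin_cubic_def vec2_eq_iff)
  define n2 n3 where "n2 = gq *s nt + na" and "n3 = gr *s nt + nb"
  let ?N = "dual_coords nt n2 n3"
  have n23: "dot3 n2 t = dot3 nt t * gq + dot3 na t" "dot3 n3 t = dot3 nt t * gr + dot3 nb t" for t
    unfolding n2_def n3_def by (simp_all add: dot3_add_left dot3_diff_left dot3_smult_left)
  have fc': "fibre_cubic qs t (lin2 m11 m12 m21 m22 z)
      = bin_cubic (dot3 nt t * gp) (dot3 n2 t) (dot3 n3 t) (dot3 nt t * gs) z" for t z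
    unfolding fc sp n23 bin_cubic_def by (simp add: algebra_simps power2_eq_square power3_eq_cube)
  interpret coord_change ?N
    by (rule coord_change_dual_coords) (use basis in \<open>simp add: n23\<close>)
  have "branch qs = {proj t | t. t \<noteq> 0
      \<and> cubic_disc (dot3 nt t * gp) (dot3 n2 t) (dot3 n3 t) (dot3 nt t * gs) = 0}"
    by (rule branch_eq_cubic_disc_zero[OF bpf det fc']) (use basis gs in \<open>auto simp: n23\<close>)
  also have "\<dots> = {proj t | t. t \<noteq> 0 \<and> split_quartic gp gs (?N t) = 0}"
    unfolding split_quartic_def dual_coords_def by (simp add: mult.commute)
  finally show ?thesis
    using contains_line_comp not_contains_line_zeroset[OF split_quartic_smult _
        split_quartic_nonvanishing_on_line[OF gp gs]] by auto
qed

lemma lin2_normalizing_square: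
  fixes l :: "complex^2"
  assumes "l \<noteq> 0"
  obtains m11 m12 m21 m22 where
    "\<And>z. l$1 * lin2 m11 m12 m21 m22 z $ 1 + l$2 * lin2 m11 m12 m21 m22 z $ 2 = z$1"
    "m11 * m22 - m12 * m21 \<noteq> 0"
proof (cases "l$1 = 0")
  case False
  then have "l$1 * lin2 (1/l$1) (l$2) 0 (- l$1) z $ 1 + l$2 * lin2 (1/l$1) (l$2) 0 (- l$1) z $ 2 = z$1"
    for z by (simp add: lin2_def field_simps)
  moreover have "1/l$1 * - l$1 - l$2 * 0 \<noteq> 0" using False by simp
  ultimately show ?thesis by (rule that)
next
  case True
  then have l2: "l$2 \<noteq> 0" using assms by (simp add: vec2_neq_0_iff)
  then have "l$1 * lin2 0 (l$2) (1/l$2) (- l$1) z $ 1 + l$2 * lin2 0 (l$2) (1/l$2) (- l$1) z $ 2 = z$1"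
    for z using True by (simp add: lin2_def field_simps)
  moreover have "0 * - l$1 - l$2 * (1/l$2) \<noteq> 0" using l2 by simp
  ultimately show ?thesis by (rule that)
qed

lemma lin2_normalizing_pair:
  fixes l m :: "complex^2"
  assumes d: "l$1 * m$2 - l$2 * m$1 \<noteq> 0"
  obtains m11 m12 m21 m22 where
    "\<And>z. l$1 * lin2 m11 m12 m21 m22 z $ 1 + l$2 * lin2 m11 m12 m21 m22 z $ 2 = z$1"
    "\<And>z. m$1 * lin2 m11 m12 m21 m22 z $ 1 + m$2 * lin2 m11 m12 m21 m22 z $ 2 = z$2"
    "m11 * m22 - m12 * m21 \<noteq> 0"
proof -
  define dd where "dd = l$1 * m$2 - l$2 * m$1"
  have dd: "dd \<noteq> 0" using d dd_def by simp
  let ?M = "lin2 (m$2/dd) (- l$2/dd) (- m$1/dd) (l$1/dd)"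
  have "l$1 * ?M z $ 1 + l$2 * ?M z $ 2 = (l$1 * m$2 - l$2 * m$1) * z$1 / dd"
    and "m$1 * ?M z $ 1 + m$2 * ?M z $ 2 = (l$1 * m$2 - l$2 * m$1) * z$2 / dd" for z
    unfolding lin2_def using dd by (simp_all add: field_simps)
  then have "l$1 * ?M z $ 1 + l$2 * ?M z $ 2 = z$1" "m$1 * ?M z $ 1 + m$2 * ?M z $ 2 = z$2" for z
    using dd unfolding dd_def by simp_all
  moreover have "(m$2/dd) * (l$1/dd) - (- l$2/dd) * (- m$1/dd) = (m$2 * l$1 - l$2 * m$1) / (dd * dd)"
    by (simp add: times_divide_times_eq diff_divide_distrib)
  then have "(m$2/dd) * (l$1/dd) - (- l$2/dd) * (- m$1/dd) \<noteq> 0"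
    using dd unfolding dd_def by (simp add: mult.commute)
  ultimately show ?thesis by (rule that)
qed

lemma branch_if_EFF_member_square:
  assumes bpf: "base_point_free qs" and l: "l \<noteq> 0" "EFF_member qs = fibquad l l"
  shows "cuspidal_cubic_and_flex_tangent (branch qs)"
proof -
  obtain m11 m12 m21 m22 where M:
    "\<And>z. l$1 * lin2 m11 m12 m21 m22 z $ 1 + l$2 * lin2 m11 m12 m21 m22 z $ 2 = z$1"
    "m11 * m22 - m12 * m21 \<noteq> 0"
    using lin2_normalizing_square[OF l(1)] by blast
  have "EFF_quad qs (lin2 m11 m12 m21 m22 z) = (z$1)^2" for z
    unfolding EFF_quad_fibquad[OF l(2)] M(1) by (simp add: power2_eq_square)
  then show ?thesis by (rule branch_if_EFF_quad_square[OF bpf M(2)])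
qed

lemma no_line_in_branch_if_EFF_member_split:
  assumes bpf: "base_point_free qs"
    and lm: "l$1 * m$2 - l$2 * m$1 \<noteq> 0" "EFF_member qs = fibquad l m"
  shows "\<not> contains_line (branch qs)"
proof -
  obtain m11 m12 m21 m22 where M:
    "\<And>z. l$1 * lin2 m11 m12 m21 m22 z $ 1 + l$2 * lin2 m11 m12 m21 m22 z $ 2 = z$1"
    "\<And>z. m$1 * lin2 m11 m12 m21 m22 z $ 1 + m$2 * lin2 m11 m12 m21 m22 z $ 2 = z$2"
    "m11 * m22 - m12 * m21 \<noteq> 0"
    using lin2_normalizing_pair[OF lm(1)] by blast
  have "EFF_quad qs (lin2 m11 m12 m21 m22 z) = z$1 * z$2" for z
    unfolding EFF_quad_fibquad[OF lm(2)] M(1) M(2) ..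
  then show ?thesis by (rule no_line_in_branch_if_EFF_quad_split[OF bpf M(3)])
qed

theorem mainTheorem8:
  fixes qs :: "3 \<Rightarrow> complex^5"
  assumes "lin_indep3 qs" and "base_point_free qs"
  shows "(members_E2F qs \<noteq> {} \<longleftrightarrow>
            (\<exists>P Q. indep2 P Q \<and> lineset P Q \<subseteq> branch qs))
       \<and> ((\<exists>P Q. indep2 P Q \<and> lineset P Q \<subseteq> branch qs) \<longleftrightarrow>
            (\<exists>f P Q. cuspidal_cubic f \<and> flex_pt f P
                   \<and> (\<forall>P'. flex_pt f P' \<longrightarrow> proj P' = proj P)
                   \<and> indep2 P Q \<and> contact f P Q 2
                   \<and> branch qs = zeroset f \<union> lineset P Q))
       \<and> (\<forall>a\<in>members_E2F qs. \<forall>b\<in>members_E2F qs. a = b)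
       \<and> (\<exists>!m. m \<in> members_EFF qs)"
proof -
  have "(members_E2F qs \<noteq> {} \<longleftrightarrow> contains_line (branch qs))
      \<and> (contains_line (branch qs) \<longleftrightarrow> cuspidal_cubic_and_flex_tangent (branch qs))"
  proof (cases "\<exists>l. l \<noteq> 0 \<and> EFF_member qs = fibquad l l")
    case True
    then have "cuspidal_cubic_and_flex_tangent (branch qs)"
      using branch_if_EFF_member_square[OF assms(2)] by blast
    then show ?thesis
      using True members_E2F_nonempty_iff[OF assms] contains_line_if_cuspidal_cubic_and_flex_tangent
      by simp
  next
    case False
    then obtain l m where "l$1 * m$2 - l$2 * m$1 \<noteq> 0" "EFF_member qs = fibquad l m"
      by (rule EFF_member_split[OF assms])
    then have "\<not> contains_line (branch qs)" by (rule no_line_in_branch_if_EFF_member_split[OF assms(2)])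
    then show ?thesis
      using False members_E2F_nonempty_iff[OF assms] contains_line_if_cuspidal_cubic_and_flex_tangent
      by blast
  qed
  then show ?thesis
    unfolding contains_line_def[symmetric] cuspidal_cubic_and_flex_tangent_def[symmetric]
    using members_EFF_eq[OF assms] members_E2F_subset_members_EFF[of qs] by auto
qed

end
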